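(* Consider the cellular $1$-chain on the surface $D$ $$\tilde\delta^E_{\mathrm{edge}}:=\sum_{x\in E}\sum_{y:\,in(y)=x}y-\sum_{x\in\iota E}\sum_{y:\,in(y)=x}y .$$ Then $\tilde\delta^E_{\mathrm{edge}}$ is a boundary modulo $3$. More precisely, for any face $z_o$ of $D$, letting $D(z_o)$ be the complement in $D$ of the interiors of $z_o$ and $\iota z_o$, there are integers $n_z$ indexed by the faces $z\neq z_o,\iota z_o$ such that $\tilde\delta^E_{\mathrm{edge}}\equiv\sum_z n_z\,\partial z$ modulo $3$ times the group of cellular $1$-chains; i.e. $\tilde\delta^E_{\mathrm{edge}}$ is a boundary modulo $3$ as a chain on $D(z_o)$.
   Context: $D\subset\mathbb R^3$ is a regular dodecahedron centered at $0$ regarded as a cellular 2-sphere (vertices, oriented edges, faces with their outward-induced orientation), $\iota=-\mathrm{id}$. For an oriented edge $y$, $in(y)$ is its initial vertex. $\mathcal K$ is the set of five cubes inscribed in $D$; for a fixed $e\in\mathcal K$, its 8 vertices split into two 4-element sets of pairwise non-adjacent (in the cube) vertices, $E$ and $\iota E$. *)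

theory Defs
  imports "HOL-Analysis.Analysis" "HOL-Library.Function_Algebras"
begin

type_synonym pt = "real^3"

definition gphi :: real where "gphi = (1 + sqrt 5) / 2"

definition dodeca_V :: "pt set" where
  "dodeca_V =
     {vector [a, b, c] | a b c. a \<in> {-1, 1} \<and> b \<in> {-1, 1} \<and> c \<in> {-1, 1}}
   \<union> {vector [0, s / gphi, t * gphi] | s t. s \<in> {-1, 1} \<and> t \<in> {-1, 1}}
   \<union> {vector [s / gphi, t * gphi, 0] | s t. s \<in> {-1, 1} \<and> t \<in> {-1, 1}}
   \<union> {vector [t * gphi, 0, s / gphi] | s t. s \<in> {-1, 1} \<and> t \<in> {-1, 1}}"

definition exposed_face :: "pt set \<Rightarrow> pt set \<Rightarrow> bool" where
  "exposed_face V F \<longleftrightarrow> (\<exists>n c. n \<noteq> 0 \<and> (\<forall>v\<in>V. n \<bullet> v \<le> c) \<and> F = {v\<in>V. n \<bullet> v = c})"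

definition dodeca_faces :: "pt set set" where
  "dodeca_faces = {F. exposed_face dodeca_V F \<and> card F \<ge> 3}"

definition dodeca_oedges :: "(pt \<times> pt) set" where
  "dodeca_oedges = {(u, v). u \<noteq> v \<and> exposed_face dodeca_V {u, v}}"

text \<open>Cellular integral 1-chains are represented as functions on ordered pairs;
  the oriented edge (u,v) is the chain with value 1 at (u,v) and -1 at (v,u),
  so that the reversed edge is the negative chain.\<close>
type_synonym chain1 = "pt \<times> pt \<Rightarrow> int"

definition edge_chain :: "pt \<times> pt \<Rightarrow> chain1" where
  "edge_chain y = (\<lambda>w. if w = y then 1 else if w = (snd y, fst y) then -1 else 0)"

text \<open>Boundary of a face with the orientation induced by the outward normal: an edge (u,v)
  of the face is positively oriented iff det(u, v, p) > 0 where p is the (outward) sum of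
  the face's vertices (counterclockwise seen from outside).\<close>
definition face_boundary :: "pt set \<Rightarrow> chain1" where
  "face_boundary z = (\<Sum>y\<in>{(u, v). (u, v) \<in> dodeca_oedges \<and> u \<in> z \<and> v \<in> z
        \<and> (cross3 u v) \<bullet> (\<Sum>w\<in>z. w) > 0}. edge_chain y)"

definition is_cube_vertex_set :: "pt set \<Rightarrow> bool" where
  "is_cube_vertex_set S \<longleftrightarrow> (\<exists>a e1 e2 e3. e1 \<noteq> 0 \<and> norm e1 = norm e2 \<and> norm e2 = norm e3
      \<and> e1 \<bullet> e2 = 0 \<and> e2 \<bullet> e3 = 0 \<and> e1 \<bullet> e3 = 0
      \<and> S = {a + s1 *\<^sub>R e1 + s2 *\<^sub>R e2 + s3 *\<^sub>R e3 | s1 s2 s3.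
               s1 \<in> {-1, 1} \<and> s2 \<in> {-1, 1} \<and> s3 \<in> {-1, 1}})"

definition inscribed_cubes :: "pt set set" where
  "inscribed_cubes = {S. S \<subseteq> dodeca_V \<and> is_cube_vertex_set S}"

definition cube_adj :: "pt set \<Rightarrow> pt \<Rightarrow> pt \<Rightarrow> bool" where
  "cube_adj S u v \<longleftrightarrow> u \<in> S \<and> v \<in> S \<and> u \<noteq> v \<and>
     (\<forall>w\<in>S. \<forall>w'\<in>S. w \<noteq> w' \<longrightarrow> dist u v \<le> dist w w')"

definition delta_edge :: "pt set \<Rightarrow> chain1" where
  "delta_edge E = (\<Sum>x\<in>E. \<Sum>y\<in>{y\<in>dodeca_oedges. fst y = x}. edge_chain y)
                - (\<Sum>x\<in>uminus ` E. \<Sum>y\<in>{y\<in>dodeca_oedges. fst y = x}. edge_chain y)"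

end

theory Submission
  imports Defs
begin

(* The dodecahedron is modelled exactly, with coordinates in \<int>[gphi], where signs are decidable.
   Cone certificates at each vertex (every other vertex lies in the cone spanned by its three
   edges) identify the exposed faces and edges with the 12 pentagons and 30 edges of the usual
   combinatorics. An inscribed cube lies on the circumsphere, so two non-adjacent vertices of it
   have inner product -1 or -3; hence E is one of ten tetrahedra of pairwise far vertices. For each
   of them an explicit 2-chain mod 3, invariant under the antipodal map, bounds delta_edge E, and
   subtracting a multiple of the sum of all faces (a cycle) kills its coefficients on z0 and -z0. *)

section \<open>Exact arithmetic in \<open>\<int>[gphi]\<close>\<close>

type_synonym zphi = "int \<times> int"
type_synonym zvec = "zphi \<times> zphi \<times> zphi"

fun zphi_real :: "zphi \<Rightarrow> real" where
  "zphi_real (a, b) = of_int a + of_int b * gphi"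

fun zphi_add :: "zphi \<Rightarrow> zphi \<Rightarrow> zphi" where
  "zphi_add (a, b) (c, d) = (a + c, b + d)"

fun zphi_sub :: "zphi \<Rightarrow> zphi \<Rightarrow> zphi" where
  "zphi_sub (a, b) (c, d) = (a - c, b - d)"

fun zphi_mul :: "zphi \<Rightarrow> zphi \<Rightarrow> zphi" where
  "zphi_mul (a, b) (c, d) = (a * c + b * d, a * d + b * c + b * d)"

definition sqrt5_pos :: "int \<Rightarrow> int \<Rightarrow> bool" where
  "sqrt5_pos s b \<longleftrightarrow>
     (0 \<le> s \<and> 0 \<le> b \<and> (s \<noteq> 0 \<or> b \<noteq> 0)) \<or>
     (s < 0 \<and> 0 < b \<and> s * s < 5 * b * b) \<or>
     (0 < s \<and> b < 0 \<and> 5 * b * b < s * s)"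

text \<open>Since \<open>2 (a + b gphi) = (2 a + b) + b sqrt 5\<close>, the sign of an element of \<open>\<int>[gphi]\<close>
  is decidable.\<close>
fun zphi_pos :: "zphi \<Rightarrow> bool" where
  "zphi_pos (a, b) = sqrt5_pos (2 * a + b) b"

definition zphi_apart :: "zphi \<Rightarrow> zphi \<Rightarrow> bool" where
  "zphi_apart p q \<longleftrightarrow> zphi_pos (zphi_sub p q) \<or> zphi_pos (zphi_sub q p)"

fun zvec_real :: "zvec \<Rightarrow> pt" where
  "zvec_real (x, y, z) = vector [zphi_real x, zphi_real y, zphi_real z]"

fun zvec_add :: "zvec \<Rightarrow> zvec \<Rightarrow> zvec" where
  "zvec_add (x, y, z) (x', y', z') = (zphi_add x x', zphi_add y y', zphi_add z z')"

fun zvec_sub :: "zvec \<Rightarrow> zvec \<Rightarrow> zvec" where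
  "zvec_sub (x, y, z) (x', y', z') = (zphi_sub x x', zphi_sub y y', zphi_sub z z')"

fun zvec_scale :: "zphi \<Rightarrow> zvec \<Rightarrow> zvec" where
  "zvec_scale k (x, y, z) = (zphi_mul k x, zphi_mul k y, zphi_mul k z)"

fun zvec_neg :: "zvec \<Rightarrow> zvec" where
  "zvec_neg (x, y, z) = (zphi_sub (0, 0) x, zphi_sub (0, 0) y, zphi_sub (0, 0) z)"

fun zvec_dot :: "zvec \<Rightarrow> zvec \<Rightarrow> zphi" where
  "zvec_dot (x, y, z) (x', y', z') = zphi_add (zphi_mul x x') (zphi_add (zphi_mul y y') (zphi_mul z z'))"

fun zvec_cross :: "zvec \<Rightarrow> zvec \<Rightarrow> zvec" where
  "zvec_cross (x, y, z) (x', y', z') =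
     (zphi_sub (zphi_mul y z') (zphi_mul z y'), zphi_sub (zphi_mul z x') (zphi_mul x z'),
      zphi_sub (zphi_mul x y') (zphi_mul y x'))"

fun zvec_apart :: "zvec \<Rightarrow> zvec \<Rightarrow> bool" where
  "zvec_apart (x, y, z) (x', y', z') \<longleftrightarrow> zphi_apart x x' \<or> zphi_apart y y' \<or> zphi_apart z z'"

lemma gphi_sq: "gphi * gphi = gphi + 1"
  unfolding gphi_def by (simp add: field_simps)

lemma gphi_pos: "gphi > 0"
  unfolding gphi_def by (simp add: add_pos_nonneg)

lemma divide_gphi: "x / gphi = x * (gphi - 1)"
proof -
  have "x * (gphi - 1) * gphi = x * (gphi * gphi) - x * gphi"
    by (simp add: algebra_simps)
  also have "\<dots> = x"
    unfolding gphi_sq by (simp add: algebra_simps)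
  finally show ?thesis
    using gphi_pos by (simp add: field_simps)
qed

lemma zphi_real_add: "zphi_real (zphi_add p q) = zphi_real p + zphi_real q"
  by (cases p; cases q) (simp add: algebra_simps)

lemma zphi_real_sub: "zphi_real (zphi_sub p q) = zphi_real p - zphi_real q"
  by (cases p; cases q) (simp add: algebra_simps)

lemma zphi_real_mul: "zphi_real (zphi_mul p q) = zphi_real p * zphi_real q"
proof -
  obtain a b c d where pq: "p = (a, b)" "q = (c, d)"
    by fastforce
  have "zphi_real p * zphi_real q = a * c + (a * d + b * c) * gphi + b * d * (gphi * gphi)"
    by (simp add: pq algebra_simps)
  also have "\<dots> = zphi_real (zphi_mul p q)"
    by (simp add: pq gphi_sq algebra_simps)
  finally show ?thesis ..
qed

lemma sqrt5_pos_sound: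
  assumes "sqrt5_pos s b"
  shows "real_of_int s + real_of_int b * sqrt 5 > 0"
proof -
  consider "0 \<le> s" "0 \<le> b" "s \<noteq> 0 \<or> b \<noteq> 0" | "s < 0" "0 < b" "s * s < 5 * b * b"
    | "0 < s" "b < 0" "5 * b * b < s * s"
    using assms unfolding sqrt5_pos_def by blast
  then show ?thesis
  proof cases
    case 1
    then have "0 \<le> real_of_int b * sqrt 5" "0 < real_of_int s \<or> 0 < real_of_int b * sqrt 5"
      by auto
    with \<open>0 \<le> s\<close> show ?thesis
      by linarith
  next
    case 2
    then have "sqrt (real_of_int s * real_of_int s) < sqrt (5 * (real_of_int b * real_of_int b))"
      by (intro real_sqrt_less_mono) (metis mult.assoc of_int_less_iff of_int_mult of_int_numeral)
    with 2 have "- real_of_int s < sqrt 5 * real_of_int b"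
      by (simp add: real_sqrt_mult real_sqrt_mult_self)
    then show ?thesis
      by (simp add: algebra_simps)
  next
    case 3
    then have "sqrt (5 * (real_of_int b * real_of_int b)) < sqrt (real_of_int s * real_of_int s)"
      by (intro real_sqrt_less_mono) (metis mult.assoc of_int_less_iff of_int_mult of_int_numeral)
    with 3 have "- (sqrt 5 * real_of_int b) < real_of_int s"
      by (simp add: real_sqrt_mult real_sqrt_mult_self)
    then show ?thesis
      by (simp add: algebra_simps)
  qed
qed

lemma zphi_pos_imp_pos: "zphi_pos p \<Longrightarrow> zphi_real p > 0"
proof (cases p)
  case (Pair a b)
  assume "zphi_pos p"
  then have "real_of_int (2 * a + b) + real_of_int b * sqrt 5 > 0"
    by (intro sqrt5_pos_sound) (simp add: Pair)
  moreover have "real_of_int (2 * a + b) + real_of_int b * sqrt 5 = 2 * zphi_real p"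
    by (simp add: Pair gphi_def algebra_simps)
  ultimately show ?thesis
    by simp
qed

lemma zphi_apart_imp_neq: "zphi_apart p q \<Longrightarrow> zphi_real p \<noteq> zphi_real q"
  unfolding zphi_apart_def using zphi_pos_imp_pos by (fastforce simp: zphi_real_sub)

lemma zvec_real_add: "zvec_real (zvec_add u v) = zvec_real u + zvec_real v"
  by (cases u rule: prod_cases3; cases v rule: prod_cases3) (auto simp: vec_eq_iff forall_3 zphi_real_add)

lemma zvec_real_sub: "zvec_real (zvec_sub u v) = zvec_real u - zvec_real v"
  by (cases u rule: prod_cases3; cases v rule: prod_cases3) (auto simp: vec_eq_iff forall_3 zphi_real_sub)

lemma zvec_real_scale: "zvec_real (zvec_scale k v) = zphi_real k *\<^sub>R zvec_real v"
  by (cases v rule: prod_cases3) (auto simp: vec_eq_iff forall_3 zphi_real_mul)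

lemma zvec_real_neg: "zvec_real (zvec_neg v) = - zvec_real v"
  by (cases v rule: prod_cases3) (auto simp: vec_eq_iff forall_3 zphi_real_sub)

lemma zvec_real_inner: "zvec_real u \<bullet> zvec_real v = zphi_real (zvec_dot u v)"
  by (cases u rule: prod_cases3; cases v rule: prod_cases3) (auto simp: inner_vec_def sum_3 zphi_real_add zphi_real_mul)

lemma zvec_real_cross: "cross3 (zvec_real u) (zvec_real v) = zvec_real (zvec_cross u v)"
  by (cases u rule: prod_cases3; cases v rule: prod_cases3) (auto simp: cross3_def vec_eq_iff forall_3 zphi_real_sub zphi_real_mul)

lemma zvec_apart_imp_neq: "zvec_apart u v \<Longrightarrow> zvec_real u \<noteq> zvec_real v"
  by (cases u rule: prod_cases3; cases v rule: prod_cases3) (auto simp: vec_eq_iff forall_3 dest: zphi_apart_imp_neq)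

section \<open>The vertices\<close>

text \<open>Combinatorial data, indexed by vertex numbers \<open>< 20\<close> (see \<open>vert_eq_vector\<close>) and
  pentagon numbers \<open>< 12\<close>: \<open>far_verts ! i\<close> lists the vertices at inner product \<open>-1\<close> or
  \<open>-3\<close> with vertex \<open>i\<close>, \<open>edge_basis\<close> orients each of the 30 edges once,
  \<open>pentagon_coords ! j\<close> is the boundary of pentagon \<open>j\<close> in that basis, and
  \<open>tetra_solution ! t\<close> the 2-chain bounding \<open>delta_edge\<close> of tetrahedron \<open>t\<close> mod 3.\<close>
definition vert_coords :: "zvec list" where
  "vert_coords =
    [((-1,0),(-1,0),(-1,0)), ((-1,0),(-1,0),(1,0)), ((-1,0),(1,0),(-1,0)), ((-1,0),(1,0),(1,0)),
     ((1,0),(-1,0),(-1,0)), ((1,0),(-1,0),(1,0)), ((1,0),(1,0),(-1,0)), ((1,0),(1,0),(1,0)),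
     ((0,0),(1,-1),(0,-1)), ((1,-1),(0,-1),(0,0)), ((0,-1),(0,0),(1,-1)), ((0,0),(1,-1),(0,1)),
     ((1,-1),(0,1),(0,0)), ((0,1),(0,0),(1,-1)), ((0,0),(-1,1),(0,-1)), ((-1,1),(0,-1),(0,0)),
     ((0,-1),(0,0),(-1,1)), ((0,0),(-1,1),(0,1)), ((-1,1),(0,1),(0,0)), ((0,1),(0,0),(-1,1))]"

definition nbrs :: "nat list list" where
  "nbrs =
    [[8, 9, 10], [9, 11, 16], [10, 12, 14], [12, 16, 17], [8, 13, 15], [11, 15, 19], [13, 14, 18], [17, 18, 19], [0, 4, 14], [0, 1, 15],
     [0, 2, 16], [1, 5, 17], [2, 3, 18], [4, 6, 19], [2, 6, 8], [4, 5, 9], [1, 3, 10], [3, 7, 11], [6, 7, 12], [5, 7, 13]]"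

definition antipode :: "nat list" where
  "antipode =
    [7, 6, 5, 4, 3, 2, 1, 0, 17, 18, 19, 14, 15, 16, 11, 12, 13, 8, 9, 10]"

definition pentagons :: "nat list list" where
  "pentagons =
    [[0, 1, 9, 10, 16], [0, 2, 8, 10, 14], [0, 4, 8, 9, 15], [1, 3, 11, 16, 17], [1, 5, 9, 11, 15], [2, 3, 10, 12, 16],
     [2, 6, 12, 14, 18], [3, 7, 12, 17, 18], [4, 5, 13, 15, 19], [4, 6, 8, 13, 14], [5, 7, 11, 17, 19], [6, 7, 13, 18, 19]]"

definition antipode_face :: "nat list" where
  "antipode_face =
    [11, 10, 7, 9, 6, 8, 4, 2, 5, 3, 1, 0]"

definition corner_face :: "nat list list" where
  "corner_face =
    [[0, 1, 2], [3, 0, 4], [6, 1, 5], [3, 7, 5], [8, 2, 9], [8, 10, 4], [6, 11, 9], [11, 10, 7], [9, 1, 2], [4, 2, 0],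
     [5, 0, 1], [10, 3, 4], [7, 6, 5], [11, 8, 9], [9, 1, 6], [4, 2, 8], [5, 0, 3], [10, 3, 7], [7, 6, 11], [11, 8, 10]]"

definition cone_cert :: "zphi list list list" where
  "cone_cert =
    [[[(0,0), (0,0), (0,0)], [(0,0), (0,1), (1,0)], [(1,0), (0,0), (0,1)], [(1,0), (0,1), (1,1)], [(0,1), (1,0), (0,0)], [(0,1), (1,1), (1,0)], [(1,1), (1,0), (0,1)], [(1,1), (1,1), (1,1)], [(1,0), (0,0), (0,0)], [(0,0), (1,0), (0,0)], [(0,0), (0,0), (1,0)], [(1,0), (1,1), (0,1)], [(0,1), (1,0), (1,1)], [(1,1), (0,1), (1,0)], [(0,1), (0,0), (1,0)], [(1,0), (0,1), (0,0)], [(0,0), (1,0), (0,1)], [(0,1), (1,1), (1,1)], [(1,1), (0,1), (1,1)], [(1,1), (1,1), (0,1)]],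
     [[(0,1), (0,0), (1,0)], [(0,0), (0,0), (0,0)], [(0,1), (1,0), (1,1)], [(0,0), (1,0), (0,1)], [(1,1), (0,1), (1,0)], [(1,0), (0,1), (0,0)], [(1,1), (1,1), (1,1)], [(1,0), (1,1), (0,1)], [(1,1), (1,0), (0,1)], [(1,0), (0,0), (0,0)], [(1,0), (0,0), (0,1)], [(0,0), (1,0), (0,0)], [(1,0), (0,1), (1,1)], [(1,1), (1,1), (0,1)], [(1,1), (0,1), (1,1)], [(0,1), (1,0), (0,0)], [(0,0), (0,0), (1,0)], [(0,0), (0,1), (1,0)], [(0,1), (1,1), (1,1)], [(0,1), (1,1), (1,0)]],
     [[(0,1), (0,0), (1,0)], [(1,1), (0,1), (1,0)], [(0,0), (0,0), (0,0)], [(1,0), (0,1), (0,0)], [(0,1), (1,0), (1,1)], [(1,1), (1,1), (1,1)], [(0,0), (1,0), (0,1)], [(1,0), (1,1), (0,1)], [(1,0), (0,0), (0,1)], [(1,1), (1,0), (0,1)], [(1,0), (0,0), (0,0)], [(1,1), (1,1), (0,1)], [(0,0), (1,0), (0,0)], [(1,0), (0,1), (1,1)], [(0,0), (0,0), (1,0)], [(1,1), (0,1), (1,1)], [(0,1), (1,0), (0,0)], [(0,1), (1,1), (1,0)], [(0,0), (0,1), (1,0)], [(0,1), (1,1), (1,1)]],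
     [[(0,1), (1,1), (1,0)], [(0,0), (0,1), (1,0)], [(0,1), (1,0), (0,0)], [(0,0), (0,0), (0,0)], [(1,1), (1,1), (1,1)], [(1,0), (0,1), (1,1)], [(1,1), (1,0), (0,1)], [(1,0), (0,0), (0,1)], [(1,1), (1,1), (0,1)], [(1,0), (1,1), (0,1)], [(1,0), (0,1), (0,0)], [(0,0), (1,0), (0,1)], [(1,0), (0,0), (0,0)], [(1,1), (0,1), (1,1)], [(1,1), (0,1), (1,0)], [(0,1), (1,1), (1,1)], [(0,0), (1,0), (0,0)], [(0,0), (0,0), (1,0)], [(0,1), (0,0), (1,0)], [(0,1), (1,0), (1,1)]],
     [[(0,1), (0,0), (1,0)], [(0,1), (1,0), (1,1)], [(1,1), (0,1), (1,0)], [(1,1), (1,1), (1,1)], [(0,0), (0,0), (0,0)], [(0,0), (1,0), (0,1)], [(1,0), (0,1), (0,0)], [(1,0), (1,1), (0,1)], [(1,0), (0,0), (0,0)], [(1,0), (0,0), (0,1)], [(1,1), (1,0), (0,1)], [(1,0), (0,1), (1,1)], [(1,1), (1,1), (0,1)], [(0,0), (1,0), (0,0)], [(0,1), (1,0), (0,0)], [(0,0), (0,0), (1,0)], [(1,1), (0,1), (1,1)], [(0,1), (1,1), (1,1)], [(0,1), (1,1), (1,0)], [(0,0), (0,1), (1,0)]],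
     [[(0,1), (1,1), (1,0)], [(0,1), (1,0), (0,0)], [(1,1), (1,1), (1,1)], [(1,1), (1,0), (0,1)], [(0,0), (0,1), (1,0)], [(0,0), (0,0), (0,0)], [(1,0), (0,1), (1,1)], [(1,0), (0,0), (0,1)], [(1,0), (1,1), (0,1)], [(1,0), (0,1), (0,0)], [(1,1), (1,1), (0,1)], [(1,0), (0,0), (0,0)], [(1,1), (0,1), (1,1)], [(0,0), (1,0), (0,1)], [(0,1), (1,1), (1,1)], [(0,0), (1,0), (0,0)], [(1,1), (0,1), (1,0)], [(0,1), (0,0), (1,0)], [(0,1), (1,0), (1,1)], [(0,0), (0,0), (1,0)]],
     [[(0,1), (1,1), (1,0)], [(1,1), (1,1), (1,1)], [(0,0), (0,1), (1,0)], [(1,0), (0,1), (1,1)], [(0,1), (1,0), (0,0)], [(1,1), (1,0), (0,1)], [(0,0), (0,0), (0,0)], [(1,0), (0,0), (0,1)], [(1,0), (0,1), (0,0)], [(1,1), (1,1), (0,1)], [(1,0), (1,1), (0,1)], [(1,1), (0,1), (1,1)], [(0,0), (1,0), (0,1)], [(1,0), (0,0), (0,0)], [(0,0), (1,0), (0,0)], [(1,1), (0,1), (1,0)], [(0,1), (1,1), (1,1)], [(0,1), (1,0), (1,1)], [(0,0), (0,0), (1,0)], [(0,1), (0,0), (1,0)]],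
     [[(1,1), (1,1), (1,1)], [(1,1), (1,0), (0,1)], [(0,1), (1,1), (1,0)], [(0,1), (1,0), (0,0)], [(1,0), (0,1), (1,1)], [(1,0), (0,0), (0,1)], [(0,0), (0,1), (1,0)], [(0,0), (0,0), (0,0)], [(0,1), (1,1), (1,1)], [(1,1), (0,1), (1,1)], [(1,1), (1,1), (0,1)], [(0,1), (0,0), (1,0)], [(1,0), (0,1), (0,0)], [(0,0), (1,0), (0,1)], [(1,0), (1,1), (0,1)], [(0,1), (1,0), (1,1)], [(1,1), (0,1), (1,0)], [(1,0), (0,0), (0,0)], [(0,0), (1,0), (0,0)], [(0,0), (0,0), (1,0)]],
     [[(1,0), (0,0), (0,0)], [(1,1), (0,1), (1,0)], [(1,0), (0,0), (0,1)], [(1,1), (0,1), (1,1)], [(0,0), (1,0), (0,0)], [(0,1), (1,1), (1,0)], [(0,0), (1,0), (0,1)], [(0,1), (1,1), (1,1)], [(0,0), (0,0), (0,0)], [(0,1), (1,0), (0,0)], [(0,1), (0,0), (1,0)], [(1,1), (1,1), (0,1)], [(0,1), (1,0), (1,1)], [(0,0), (0,1), (1,0)], [(0,0), (0,0), (1,0)], [(1,0), (0,1), (0,0)], [(1,1), (1,0), (0,1)], [(1,1), (1,1), (1,1)], [(1,0), (0,1), (1,1)], [(1,0), (1,1), (0,1)]],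
     [[(1,0), (0,0), (0,0)], [(0,0), (1,0), (0,0)], [(1,1), (0,1), (1,0)], [(0,1), (1,1), (1,0)], [(1,0), (0,0), (0,1)], [(0,0), (1,0), (0,1)], [(1,1), (0,1), (1,1)], [(0,1), (1,1), (1,1)], [(0,1), (0,0), (1,0)], [(0,0), (0,0), (0,0)], [(0,1), (1,0), (0,0)], [(0,0), (0,1), (1,0)], [(1,1), (1,1), (0,1)], [(0,1), (1,0), (1,1)], [(1,1), (1,0), (0,1)], [(0,0), (0,0), (1,0)], [(1,0), (0,1), (0,0)], [(1,0), (1,1), (0,1)], [(1,1), (1,1), (1,1)], [(1,0), (0,1), (1,1)]],
     [[(1,0), (0,0), (0,0)], [(1,0), (0,0), (0,1)], [(0,0), (1,0), (0,0)], [(0,0), (1,0), (0,1)], [(1,1), (0,1), (1,0)], [(1,1), (0,1), (1,1)], [(0,1), (1,1), (1,0)], [(0,1), (1,1), (1,1)], [(0,1), (1,0), (0,0)], [(0,1), (0,0), (1,0)], [(0,0), (0,0), (0,0)], [(0,1), (1,0), (1,1)], [(0,0), (0,1), (1,0)], [(1,1), (1,1), (0,1)], [(1,0), (0,1), (0,0)], [(1,1), (1,0), (0,1)], [(0,0), (0,0), (1,0)], [(1,0), (0,1), (1,1)], [(1,0), (1,1), (0,1)], [(1,1), (1,1), (1,1)]],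
     [[(1,1), (0,1), (1,0)], [(1,0), (0,0), (0,0)], [(1,1), (0,1), (1,1)], [(1,0), (0,0), (0,1)], [(0,1), (1,1), (1,0)], [(0,0), (1,0), (0,0)], [(0,1), (1,1), (1,1)], [(0,0), (1,0), (0,1)], [(1,1), (1,1), (0,1)], [(0,1), (1,0), (0,0)], [(1,1), (1,0), (0,1)], [(0,0), (0,0), (0,0)], [(0,1), (1,0), (1,1)], [(1,0), (1,1), (0,1)], [(1,1), (1,1), (1,1)], [(1,0), (0,1), (0,0)], [(0,1), (0,0), (1,0)], [(0,0), (0,0), (1,0)], [(1,0), (0,1), (1,1)], [(0,0), (0,1), (1,0)]],
     [[(1,1), (0,1), (1,0)], [(0,1), (1,1), (1,0)], [(1,0), (0,0), (0,0)], [(0,0), (1,0), (0,0)], [(1,1), (0,1), (1,1)], [(0,1), (1,1), (1,1)], [(1,0), (0,0), (0,1)], [(0,0), (1,0), (0,1)], [(1,1), (1,0), (0,1)], [(1,1), (1,1), (0,1)], [(0,1), (1,0), (0,0)], [(1,0), (1,1), (0,1)], [(0,0), (0,0), (0,0)], [(0,1), (1,0), (1,1)], [(0,1), (0,0), (1,0)], [(1,1), (1,1), (1,1)], [(1,0), (0,1), (0,0)], [(0,0), (0,1), (1,0)], [(0,0), (0,0), (1,0)], [(1,0), (0,1), (1,1)]],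
     [[(1,1), (0,1), (1,0)], [(1,1), (0,1), (1,1)], [(0,1), (1,1), (1,0)], [(0,1), (1,1), (1,1)], [(1,0), (0,0), (0,0)], [(1,0), (0,0), (0,1)], [(0,0), (1,0), (0,0)], [(0,0), (1,0), (0,1)], [(0,1), (1,0), (0,0)], [(1,1), (1,0), (0,1)], [(1,1), (1,1), (0,1)], [(0,1), (1,0), (1,1)], [(1,0), (1,1), (0,1)], [(0,0), (0,0), (0,0)], [(1,0), (0,1), (0,0)], [(0,1), (0,0), (1,0)], [(1,1), (1,1), (1,1)], [(1,0), (0,1), (1,1)], [(0,0), (0,1), (1,0)], [(0,0), (0,0), (1,0)]],
     [[(1,0), (0,0), (0,1)], [(1,1), (0,1), (1,1)], [(1,0), (0,0), (0,0)], [(1,1), (0,1), (1,0)], [(0,0), (1,0), (0,1)], [(0,1), (1,1), (1,1)], [(0,0), (1,0), (0,0)], [(0,1), (1,1), (1,0)], [(0,0), (0,0), (1,0)], [(0,1), (1,0), (1,1)], [(0,1), (0,0), (1,0)], [(1,1), (1,1), (1,1)], [(0,1), (1,0), (0,0)], [(0,0), (0,1), (1,0)], [(0,0), (0,0), (0,0)], [(1,0), (0,1), (1,1)], [(1,1), (1,0), (0,1)], [(1,1), (1,1), (0,1)], [(1,0), (0,1), (0,0)], [(1,0), (1,1), (0,1)]],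
     [[(1,0), (0,0), (0,1)], [(0,0), (1,0), (0,1)], [(1,1), (0,1), (1,1)], [(0,1), (1,1), (1,1)], [(1,0), (0,0), (0,0)], [(0,0), (1,0), (0,0)], [(1,1), (0,1), (1,0)], [(0,1), (1,1), (1,0)], [(0,1), (0,0), (1,0)], [(0,0), (0,0), (1,0)], [(0,1), (1,0), (1,1)], [(0,0), (0,1), (1,0)], [(1,1), (1,1), (1,1)], [(0,1), (1,0), (0,0)], [(1,1), (1,0), (0,1)], [(0,0), (0,0), (0,0)], [(1,0), (0,1), (1,1)], [(1,0), (1,1), (0,1)], [(1,1), (1,1), (0,1)], [(1,0), (0,1), (0,0)]],
     [[(1,0), (0,0), (0,1)], [(1,0), (0,0), (0,0)], [(0,0), (1,0), (0,1)], [(0,0), (1,0), (0,0)], [(1,1), (0,1), (1,1)], [(1,1), (0,1), (1,0)], [(0,1), (1,1), (1,1)], [(0,1), (1,1), (1,0)], [(0,1), (1,0), (1,1)], [(0,1), (0,0), (1,0)], [(0,0), (0,0), (1,0)], [(0,1), (1,0), (0,0)], [(0,0), (0,1), (1,0)], [(1,1), (1,1), (1,1)], [(1,0), (0,1), (1,1)], [(1,1), (1,0), (0,1)], [(0,0), (0,0), (0,0)], [(1,0), (0,1), (0,0)], [(1,0), (1,1), (0,1)], [(1,1), (1,1), (0,1)]],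
     [[(1,1), (0,1), (1,1)], [(1,0), (0,0), (0,1)], [(1,1), (0,1), (1,0)], [(1,0), (0,0), (0,0)], [(0,1), (1,1), (1,1)], [(0,0), (1,0), (0,1)], [(0,1), (1,1), (1,0)], [(0,0), (1,0), (0,0)], [(1,1), (1,1), (1,1)], [(0,1), (1,0), (1,1)], [(1,1), (1,0), (0,1)], [(0,0), (0,0), (1,0)], [(0,1), (1,0), (0,0)], [(1,0), (1,1), (0,1)], [(1,1), (1,1), (0,1)], [(1,0), (0,1), (1,1)], [(0,1), (0,0), (1,0)], [(0,0), (0,0), (0,0)], [(1,0), (0,1), (0,0)], [(0,0), (0,1), (1,0)]],
     [[(1,1), (0,1), (1,1)], [(0,1), (1,1), (1,1)], [(1,0), (0,0), (0,1)], [(0,0), (1,0), (0,1)], [(1,1), (0,1), (1,0)], [(0,1), (1,1), (1,0)], [(1,0), (0,0), (0,0)], [(0,0), (1,0), (0,0)], [(1,1), (1,0), (0,1)], [(1,1), (1,1), (1,1)], [(0,1), (1,0), (1,1)], [(1,0), (1,1), (0,1)], [(0,0), (0,0), (1,0)], [(0,1), (1,0), (0,0)], [(0,1), (0,0), (1,0)], [(1,1), (1,1), (0,1)], [(1,0), (0,1), (1,1)], [(0,0), (0,1), (1,0)], [(0,0), (0,0), (0,0)], [(1,0), (0,1), (0,0)]],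
     [[(1,1), (0,1), (1,1)], [(1,1), (0,1), (1,0)], [(0,1), (1,1), (1,1)], [(0,1), (1,1), (1,0)], [(1,0), (0,0), (0,1)], [(1,0), (0,0), (0,0)], [(0,0), (1,0), (0,1)], [(0,0), (1,0), (0,0)], [(0,1), (1,0), (1,1)], [(1,1), (1,0), (0,1)], [(1,1), (1,1), (1,1)], [(0,1), (1,0), (0,0)], [(1,0), (1,1), (0,1)], [(0,0), (0,0), (1,0)], [(1,0), (0,1), (1,1)], [(0,1), (0,0), (1,0)], [(1,1), (1,1), (0,1)], [(1,0), (0,1), (0,0)], [(0,0), (0,1), (1,0)], [(0,0), (0,0), (0,0)]]]"

definition far_verts :: "nat list list" where
  "far_verts =
    [[3, 5, 6, 7, 11, 12, 13], [2, 4, 6, 7, 8, 12, 19], [1, 4, 5, 7, 9, 13, 17], [0, 4, 5, 6, 9, 14, 19], [1, 2, 3, 7, 10, 11, 18],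
     [0, 2, 3, 6, 8, 16, 18], [0, 1, 3, 5, 10, 15, 17], [0, 1, 2, 4, 14, 15, 16], [1, 5, 12, 16, 17, 18, 19], [2, 3, 13, 14, 17, 18, 19],
     [4, 6, 11, 15, 17, 18, 19], [0, 4, 10, 12, 13, 14, 18], [0, 1, 8, 11, 13, 15, 19], [0, 2, 9, 11, 12, 16, 17], [3, 7, 9, 11, 15, 16, 19],
     [6, 7, 10, 12, 14, 16, 17], [5, 7, 8, 13, 14, 15, 18], [2, 6, 8, 9, 10, 13, 15], [4, 5, 8, 9, 10, 11, 16], [1, 3, 8, 9, 10, 12, 14]]"

definition tetrahedra :: "nat list list" where
  "tetrahedra =
    [[0, 3, 5, 6], [0, 11, 12, 13], [1, 2, 4, 7], [1, 8, 12, 19], [2, 9, 13, 17], [3, 9, 14, 19], [4, 10, 11, 18], [5, 8, 16, 18], [6, 10, 15, 17], [7, 14, 15, 16]]"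

definition edge_basis :: "(nat \<times> nat) list" where
  "edge_basis =
    [(0,8), (0,9), (0,10), (1,9), (1,11), (1,16), (2,10), (2,12), (2,14), (3,12),
     (3,16), (3,17), (4,8), (4,13), (4,15), (5,11), (5,15), (5,19), (6,13), (6,14),
     (6,18), (7,17), (7,18), (7,19), (8,14), (9,15), (10,16), (11,17), (12,18), (13,19)]"

definition pentagon_coords :: "int list list" where
  "pentagon_coords =
    [[0, 1, -1, -1, 0, 1, 0, 0, 0, 0, 0, 0, 0, 0, 0, 0, 0, 0, 0, 0, 0, 0, 0, 0, 0, 0, -1, 0, 0, 0],
     [-1, 0, 1, 0, 0, 0, -1, 0, 1, 0, 0, 0, 0, 0, 0, 0, 0, 0, 0, 0, 0, 0, 0, 0, -1, 0, 0, 0, 0, 0],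
     [1, -1, 0, 0, 0, 0, 0, 0, 0, 0, 0, 0, -1, 0, 1, 0, 0, 0, 0, 0, 0, 0, 0, 0, 0, -1, 0, 0, 0, 0],
     [0, 0, 0, 0, 1, -1, 0, 0, 0, 0, 1, -1, 0, 0, 0, 0, 0, 0, 0, 0, 0, 0, 0, 0, 0, 0, 0, 1, 0, 0],
     [0, 0, 0, 1, -1, 0, 0, 0, 0, 0, 0, 0, 0, 0, 0, 1, -1, 0, 0, 0, 0, 0, 0, 0, 0, 1, 0, 0, 0, 0],
     [0, 0, 0, 0, 0, 0, 1, -1, 0, 1, -1, 0, 0, 0, 0, 0, 0, 0, 0, 0, 0, 0, 0, 0, 0, 0, 1, 0, 0, 0],
     [0, 0, 0, 0, 0, 0, 0, 1, -1, 0, 0, 0, 0, 0, 0, 0, 0, 0, 0, 1, -1, 0, 0, 0, 0, 0, 0, 0, 1, 0],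
     [0, 0, 0, 0, 0, 0, 0, 0, 0, -1, 0, 1, 0, 0, 0, 0, 0, 0, 0, 0, 0, -1, 1, 0, 0, 0, 0, 0, -1, 0],
     [0, 0, 0, 0, 0, 0, 0, 0, 0, 0, 0, 0, 0, 1, -1, 0, 1, -1, 0, 0, 0, 0, 0, 0, 0, 0, 0, 0, 0, 1],
     [0, 0, 0, 0, 0, 0, 0, 0, 0, 0, 0, 0, 1, -1, 0, 0, 0, 0, 1, -1, 0, 0, 0, 0, 1, 0, 0, 0, 0, 0],
     [0, 0, 0, 0, 0, 0, 0, 0, 0, 0, 0, 0, 0, 0, 0, -1, 0, 1, 0, 0, 0, 1, 0, -1, 0, 0, 0, -1, 0, 0],
     [0, 0, 0, 0, 0, 0, 0, 0, 0, 0, 0, 0, 0, 0, 0, 0, 0, 0, -1, 0, 1, 0, -1, 1, 0, 0, 0, 0, 0, -1]]"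

definition tetra_solution :: "int list list" where
  "tetra_solution =
    [[0, 1, 2, 1, 2, 0, 2, 2, 0, 1, 1, 0], [0, 1, 2, 2, 0, 1, 0, 2, 1, 2, 1, 0],
     [0, 2, 1, 2, 1, 0, 1, 1, 0, 2, 2, 0], [0, 1, 0, 2, 1, 2, 1, 0, 2, 2, 1, 0],
     [0, 0, 1, 2, 2, 1, 2, 1, 1, 2, 0, 0], [0, 1, 1, 0, 2, 2, 2, 1, 2, 0, 1, 0],
     [0, 2, 2, 0, 1, 1, 1, 2, 1, 0, 2, 0], [0, 0, 2, 1, 1, 2, 1, 2, 2, 1, 0, 0],
     [0, 2, 0, 1, 2, 1, 2, 0, 1, 1, 2, 0], [0, 2, 1, 1, 0, 2, 0, 1, 2, 1, 2, 0]]"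

schematic_goal vert_coords_nth:
  "vert_coords ! 0 = ?x0" "vert_coords ! 1 = ?x1" "vert_coords ! 2 = ?x2" "vert_coords ! 3 = ?x3"
  "vert_coords ! 4 = ?x4" "vert_coords ! 5 = ?x5" "vert_coords ! 6 = ?x6" "vert_coords ! 7 = ?x7"
  "vert_coords ! 8 = ?x8" "vert_coords ! 9 = ?x9" "vert_coords ! 10 = ?x10" "vert_coords ! 11 = ?x11"
  "vert_coords ! 12 = ?x12" "vert_coords ! 13 = ?x13" "vert_coords ! 14 = ?x14" "vert_coords ! 15 = ?x15"
  "vert_coords ! 16 = ?x16" "vert_coords ! 17 = ?x17" "vert_coords ! 18 = ?x18" "vert_coords ! 19 = ?x19"
  "vert_coords ! Suc 0 = ?y"
  by (simp_all add: vert_coords_def)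

schematic_goal nbrs_nth:
  "nbrs ! 0 = ?x0" "nbrs ! 1 = ?x1" "nbrs ! 2 = ?x2" "nbrs ! 3 = ?x3"
  "nbrs ! 4 = ?x4" "nbrs ! 5 = ?x5" "nbrs ! 6 = ?x6" "nbrs ! 7 = ?x7"
  "nbrs ! 8 = ?x8" "nbrs ! 9 = ?x9" "nbrs ! 10 = ?x10" "nbrs ! 11 = ?x11"
  "nbrs ! 12 = ?x12" "nbrs ! 13 = ?x13" "nbrs ! 14 = ?x14" "nbrs ! 15 = ?x15"
  "nbrs ! 16 = ?x16" "nbrs ! 17 = ?x17" "nbrs ! 18 = ?x18" "nbrs ! 19 = ?x19"
  "nbrs ! Suc 0 = ?y"
  by (simp_all add: nbrs_def)

schematic_goal antipode_nth:
  "antipode ! 0 = ?x0" "antipode ! 1 = ?x1" "antipode ! 2 = ?x2" "antipode ! 3 = ?x3"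
  "antipode ! 4 = ?x4" "antipode ! 5 = ?x5" "antipode ! 6 = ?x6" "antipode ! 7 = ?x7"
  "antipode ! 8 = ?x8" "antipode ! 9 = ?x9" "antipode ! 10 = ?x10" "antipode ! 11 = ?x11"
  "antipode ! 12 = ?x12" "antipode ! 13 = ?x13" "antipode ! 14 = ?x14" "antipode ! 15 = ?x15"
  "antipode ! 16 = ?x16" "antipode ! 17 = ?x17" "antipode ! 18 = ?x18" "antipode ! 19 = ?x19"
  "antipode ! Suc 0 = ?y"
  by (simp_all add: antipode_def)

schematic_goal pentagons_nth:
  "pentagons ! 0 = ?x0" "pentagons ! 1 = ?x1" "pentagons ! 2 = ?x2" "pentagons ! 3 = ?x3"
  "pentagons ! 4 = ?x4" "pentagons ! 5 = ?x5" "pentagons ! 6 = ?x6" "pentagons ! 7 = ?x7"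
  "pentagons ! 8 = ?x8" "pentagons ! 9 = ?x9" "pentagons ! 10 = ?x10" "pentagons ! 11 = ?x11"
  "pentagons ! Suc 0 = ?y"
  by (simp_all add: pentagons_def)

schematic_goal antipode_face_nth:
  "antipode_face ! 0 = ?x0" "antipode_face ! 1 = ?x1" "antipode_face ! 2 = ?x2" "antipode_face ! 3 = ?x3"
  "antipode_face ! 4 = ?x4" "antipode_face ! 5 = ?x5" "antipode_face ! 6 = ?x6" "antipode_face ! 7 = ?x7"
  "antipode_face ! 8 = ?x8" "antipode_face ! 9 = ?x9" "antipode_face ! 10 = ?x10" "antipode_face ! 11 = ?x11"
  "antipode_face ! Suc 0 = ?y"
  by (simp_all add: antipode_face_def)

schematic_goal corner_face_nth:
  "corner_face ! 0 = ?x0" "corner_face ! 1 = ?x1" "corner_face ! 2 = ?x2" "corner_face ! 3 = ?x3"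
  "corner_face ! 4 = ?x4" "corner_face ! 5 = ?x5" "corner_face ! 6 = ?x6" "corner_face ! 7 = ?x7"
  "corner_face ! 8 = ?x8" "corner_face ! 9 = ?x9" "corner_face ! 10 = ?x10" "corner_face ! 11 = ?x11"
  "corner_face ! 12 = ?x12" "corner_face ! 13 = ?x13" "corner_face ! 14 = ?x14" "corner_face ! 15 = ?x15"
  "corner_face ! 16 = ?x16" "corner_face ! 17 = ?x17" "corner_face ! 18 = ?x18" "corner_face ! 19 = ?x19"
  "corner_face ! Suc 0 = ?y"
  by (simp_all add: corner_face_def)

schematic_goal cone_cert_nth:
  "cone_cert ! 0 = ?x0" "cone_cert ! 1 = ?x1" "cone_cert ! 2 = ?x2" "cone_cert ! 3 = ?x3"
  "cone_cert ! 4 = ?x4" "cone_cert ! 5 = ?x5" "cone_cert ! 6 = ?x6" "cone_cert ! 7 = ?x7"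
  "cone_cert ! 8 = ?x8" "cone_cert ! 9 = ?x9" "cone_cert ! 10 = ?x10" "cone_cert ! 11 = ?x11"
  "cone_cert ! 12 = ?x12" "cone_cert ! 13 = ?x13" "cone_cert ! 14 = ?x14" "cone_cert ! 15 = ?x15"
  "cone_cert ! 16 = ?x16" "cone_cert ! 17 = ?x17" "cone_cert ! 18 = ?x18" "cone_cert ! 19 = ?x19"
  "cone_cert ! Suc 0 = ?y"
  by (simp_all add: cone_cert_def)

schematic_goal far_verts_nth:
  "far_verts ! 0 = ?x0" "far_verts ! 1 = ?x1" "far_verts ! 2 = ?x2" "far_verts ! 3 = ?x3"
  "far_verts ! 4 = ?x4" "far_verts ! 5 = ?x5" "far_verts ! 6 = ?x6" "far_verts ! 7 = ?x7"
  "far_verts ! 8 = ?x8" "far_verts ! 9 = ?x9" "far_verts ! 10 = ?x10" "far_verts ! 11 = ?x11"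
  "far_verts ! 12 = ?x12" "far_verts ! 13 = ?x13" "far_verts ! 14 = ?x14" "far_verts ! 15 = ?x15"
  "far_verts ! 16 = ?x16" "far_verts ! 17 = ?x17" "far_verts ! 18 = ?x18" "far_verts ! 19 = ?x19"
  "far_verts ! Suc 0 = ?y"
  by (simp_all add: far_verts_def)

schematic_goal tetrahedra_nth:
  "tetrahedra ! 0 = ?x0" "tetrahedra ! 1 = ?x1" "tetrahedra ! 2 = ?x2" "tetrahedra ! 3 = ?x3"
  "tetrahedra ! 4 = ?x4" "tetrahedra ! 5 = ?x5" "tetrahedra ! 6 = ?x6" "tetrahedra ! 7 = ?x7"
  "tetrahedra ! 8 = ?x8" "tetrahedra ! 9 = ?x9" "tetrahedra ! Suc 0 = ?y"
  by (simp_all add: tetrahedra_def)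

schematic_goal edge_basis_nth:
  "edge_basis ! 0 = ?x0" "edge_basis ! 1 = ?x1" "edge_basis ! 2 = ?x2" "edge_basis ! 3 = ?x3"
  "edge_basis ! 4 = ?x4" "edge_basis ! 5 = ?x5" "edge_basis ! 6 = ?x6" "edge_basis ! 7 = ?x7"
  "edge_basis ! 8 = ?x8" "edge_basis ! 9 = ?x9" "edge_basis ! 10 = ?x10" "edge_basis ! 11 = ?x11"
  "edge_basis ! 12 = ?x12" "edge_basis ! 13 = ?x13" "edge_basis ! 14 = ?x14" "edge_basis ! 15 = ?x15"
  "edge_basis ! 16 = ?x16" "edge_basis ! 17 = ?x17" "edge_basis ! 18 = ?x18" "edge_basis ! 19 = ?x19"
  "edge_basis ! 20 = ?x20" "edge_basis ! 21 = ?x21" "edge_basis ! 22 = ?x22" "edge_basis ! 23 = ?x23"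
  "edge_basis ! 24 = ?x24" "edge_basis ! 25 = ?x25" "edge_basis ! 26 = ?x26" "edge_basis ! 27 = ?x27"
  "edge_basis ! 28 = ?x28" "edge_basis ! 29 = ?x29" "edge_basis ! Suc 0 = ?y"
  by (simp_all add: edge_basis_def)

schematic_goal pentagon_coords_nth:
  "pentagon_coords ! 0 = ?x0" "pentagon_coords ! 1 = ?x1" "pentagon_coords ! 2 = ?x2" "pentagon_coords ! 3 = ?x3"
  "pentagon_coords ! 4 = ?x4" "pentagon_coords ! 5 = ?x5" "pentagon_coords ! 6 = ?x6" "pentagon_coords ! 7 = ?x7"
  "pentagon_coords ! 8 = ?x8" "pentagon_coords ! 9 = ?x9" "pentagon_coords ! 10 = ?x10" "pentagon_coords ! 11 = ?x11"
  "pentagon_coords ! Suc 0 = ?y"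
  by (simp_all add: pentagon_coords_def)

schematic_goal tetra_solution_nth:
  "tetra_solution ! 0 = ?x0" "tetra_solution ! 1 = ?x1" "tetra_solution ! 2 = ?x2" "tetra_solution ! 3 = ?x3"
  "tetra_solution ! 4 = ?x4" "tetra_solution ! 5 = ?x5" "tetra_solution ! 6 = ?x6" "tetra_solution ! 7 = ?x7"
  "tetra_solution ! 8 = ?x8" "tetra_solution ! 9 = ?x9" "tetra_solution ! Suc 0 = ?y"
  by (simp_all add: tetra_solution_def)

definition vert :: "nat \<Rightarrow> pt" where
  "vert i = zvec_real (vert_coords ! i)"

lemma vert_eq_vector:
  "vert 0 = vector [-1, -1, -1]" "vert 1 = vector [-1, -1, 1]"
  "vert 2 = vector [-1, 1, -1]" "vert 3 = vector [-1, 1, 1]"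
  "vert 4 = vector [1, -1, -1]" "vert 5 = vector [1, -1, 1]"
  "vert 6 = vector [1, 1, -1]" "vert 7 = vector [1, 1, 1]"
  "vert 8 = vector [0, -1 / gphi, -gphi]" "vert 9 = vector [-1 / gphi, -gphi, 0]"
  "vert 10 = vector [-gphi, 0, -1 / gphi]" "vert 11 = vector [0, -1 / gphi, gphi]"
  "vert 12 = vector [-1 / gphi, gphi, 0]" "vert 13 = vector [gphi, 0, -1 / gphi]"
  "vert 14 = vector [0, 1 / gphi, -gphi]" "vert 15 = vector [1 / gphi, -gphi, 0]"
  "vert 16 = vector [-gphi, 0, 1 / gphi]" "vert 17 = vector [0, 1 / gphi, gphi]"
  "vert 18 = vector [1 / gphi, gphi, 0]" "vert 19 = vector [gphi, 0, 1 / gphi]"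
  by (simp_all add: vert_def vert_coords_nth divide_gphi vec_eq_iff forall_3 algebra_simps)

lemma dodeca_V_eq: "dodeca_V = vert ` {..<20}"
proof -
  have three_signs: "{f a b c | a b c. a \<in> {-1, 1::real} \<and> b \<in> {-1, 1::real} \<and> c \<in> {-1, 1::real}} =
      {f (-1) (-1) (-1), f (-1) (-1) 1, f (-1) 1 (-1), f (-1) 1 1, f 1 (-1) (-1), f 1 (-1) 1, f 1 1 (-1), f 1 1 1}"
    for f :: "real \<Rightarrow> real \<Rightarrow> real \<Rightarrow> pt"
    by auto
  have two_signs: "{f s t | s t. s \<in> {-1, 1::real} \<and> t \<in> {-1, 1::real}} = {f (-1) (-1), f (-1) 1, f 1 (-1), f 1 1}"
    for f :: "real \<Rightarrow> real \<Rightarrow> pt"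
    by auto
  have "dodeca_V = {vert 0, vert 1, vert 2, vert 3, vert 4, vert 5, vert 6, vert 7, vert 8, vert 9,
      vert 10, vert 11, vert 12, vert 13, vert 14, vert 15, vert 16, vert 17, vert 18, vert 19}"
    by (simp only: dodeca_V_def three_signs two_signs vert_eq_vector) (simp add: insert_commute)
  also have "\<dots> = set (map vert [0..<20])"
    by (simp add: upt_rec numeral_eq_Suc)
  finally show ?thesis
    by (simp add: atLeast0LessThan)
qed

lemma all_less_numeral_iff:
  "(\<forall>i < numeral n. P i) \<longleftrightarrow> P (pred_numeral n) \<and> (\<forall>i < pred_numeral n. P (i :: nat))"
  by (simp only: numeral_eq_Suc All_less_Suc)

lemma all_less_zero_iff: "(\<forall>i < 0. P (i :: nat)) \<longleftrightarrow> True"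
  by simp

lemma replicate_numeral: "replicate (numeral n) x = x # replicate (pred_numeral n) x"
  by (simp add: numeral_eq_Suc)

lemma upt_zero_numeral: "[0..<numeral n] = [0..<pred_numeral n] @ [pred_numeral n]"
  by (simp only: numeral_eq_Suc upt_Suc_append zero_le)

lemmas all_less_expand = all_less_numeral_iff all_less_zero_iff pred_numeral_simps BitM.simps numeral_One

lemmas table_nth = vert_coords_nth nbrs_nth antipode_nth pentagons_nth antipode_face_nth
  corner_face_nth cone_cert_nth far_verts_nth tetrahedra_nth edge_basis_nth pentagon_coords_nth
  tetra_solution_nth

lemmas zphi_eval = sqrt5_pos_def zphi_apart_def

lemma less_3_cases: "k < (3 :: nat) \<longleftrightarrow> k = 0 \<or> k = 1 \<or> k = 2"
  by auto

lemma vert_coords_apart: "\<forall>i\<in>{..<20}. \<forall>j\<in>{..<20}. i \<noteq> j \<longrightarrow> zvec_apart (vert_coords ! i) (vert_coords ! j)"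
  by code_simp

lemma inj_on_vert: "inj_on vert {..<20}"
  using vert_coords_apart zvec_apart_imp_neq unfolding vert_def by (blast intro: inj_onI)

lemma vert_eq_iff: "i < 20 \<Longrightarrow> j < 20 \<Longrightarrow> vert i = vert j \<longleftrightarrow> i = j"
  using inj_on_vert by (auto dest: inj_onD)

lemma vert_in_dodeca_V: "i < 20 \<Longrightarrow> vert i \<in> dodeca_V"
  by (simp add: dodeca_V_eq)

lemma vert_coords_norm_antipode:
  "\<forall>i<20. antipode ! i < 20 \<and> zvec_dot (vert_coords ! i) (vert_coords ! i) = (3, 0) \<and>
     vert_coords ! (antipode ! i) = zvec_neg (vert_coords ! i)"
  by (simp only: all_less_expand) (simp add: table_nth)

lemma vert_inner: "vert i \<bullet> vert j = zphi_real (zvec_dot (vert_coords ! i) (vert_coords ! j))"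
  by (simp add: vert_def zvec_real_inner)

lemma vert_norm: "i < 20 \<Longrightarrow> vert i \<bullet> vert i = 3"
  using vert_coords_norm_antipode by (simp add: vert_inner)

lemma vert_antipode: "i < 20 \<Longrightarrow> vert (antipode ! i) = - vert i" "i < 20 \<Longrightarrow> antipode ! i < 20"
  using vert_coords_norm_antipode by (simp_all add: vert_def zvec_real_neg)

lemma dodeca_V_norm: "v \<in> dodeca_V \<Longrightarrow> v \<bullet> v = 3"
  unfolding dodeca_V_eq using vert_norm by auto

section \<open>Faces and edges\<close>

definition nbrs_ok :: "nat \<Rightarrow> bool" where
  "nbrs_ok u \<longleftrightarrow> length (nbrs ! u) = 3 \<and> distinct (nbrs ! u) \<and> u \<notin> set (nbrs ! u) \<and>
     (\<forall>k<3. nbrs ! u ! k < 20 \<and> corner_face ! u ! k < 12)"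

definition cert_support :: "nat \<Rightarrow> nat \<Rightarrow> nat list" where
  "cert_support u v = map (\<lambda>k. nbrs ! u ! k) (filter (\<lambda>k. cone_cert ! u ! v ! k \<noteq> (0, 0)) [0, 1, 2])"

text \<open>\<open>cone_cert ! u ! v\<close> writes \<open>vert v - vert u\<close> as a nonnegative combination of the three
  edge vectors at \<open>u\<close>; \<open>corner_face ! u ! k\<close> is the pentagon at \<open>u\<close> not containing the
  \<open>k\<close>-th neighbour.\<close>
definition cone_comb :: "nat \<Rightarrow> nat \<Rightarrow> zvec" where
  "cone_comb u v =
     zvec_add (zvec_scale (cone_cert ! u ! v ! 0) (zvec_sub (vert_coords ! (nbrs ! u ! 0)) (vert_coords ! u)))
      (zvec_add (zvec_scale (cone_cert ! u ! v ! 1) (zvec_sub (vert_coords ! (nbrs ! u ! 1)) (vert_coords ! u)))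
        (zvec_scale (cone_cert ! u ! v ! 2) (zvec_sub (vert_coords ! (nbrs ! u ! 2)) (vert_coords ! u))))"

definition cone_ok :: "nat \<Rightarrow> nat \<Rightarrow> bool" where
  "cone_ok u v \<longleftrightarrow> zvec_sub (vert_coords ! v) (vert_coords ! u) = cone_comb u v \<and>
     (\<forall>k<3. cone_cert ! u ! v ! k = (0, 0) \<or> zphi_pos (cone_cert ! u ! v ! k)) \<and>
     (length (cert_support u v) \<le> 1 \<longrightarrow> v \<in> set (nbrs ! u)) \<and>
     (\<forall>k<3. v \<notin> set (pentagons ! (corner_face ! u ! k)) \<longrightarrow> cone_cert ! u ! v ! k \<noteq> (0, 0))"

definition corner_ok :: "nat \<Rightarrow> bool" where
  "corner_ok u \<longleftrightarrow>
     (\<forall>k<3. u \<in> set (pentagons ! (corner_face ! u ! k)) \<and>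
        set (pentagons ! (corner_face ! u ! k)) \<subseteq>
          {u, nbrs ! u ! ((k + 1) mod 3), nbrs ! u ! ((k + 2) mod 3)}
          \<union> set (cert_support (nbrs ! u ! ((k + 1) mod 3)) (nbrs ! u ! ((k + 2) mod 3)))
          \<union> set (cert_support (nbrs ! u ! ((k + 2) mod 3)) (nbrs ! u ! ((k + 1) mod 3)))) \<and>
     (\<forall>a\<in>set (nbrs ! u). \<forall>b\<in>set (nbrs ! u). b \<notin> set (nbrs ! a))"

lemma nbrs_corner_ok_all: "\<forall>u<20. nbrs_ok u \<and> corner_ok u"
  by (simp only: nbrs_ok_def corner_ok_def all_less_expand)
    (simp add: table_nth cert_support_def insert_commute)

lemma cone_ok_all: "\<forall>u<20. \<forall>v<20. u \<noteq> v \<longrightarrow> cone_ok u v"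
  by (simp only: cone_ok_def all_less_expand)
    (simp add: table_nth cone_comb_def cert_support_def zphi_eval)

lemma nbrs_facts:
  assumes "u < 20"
  shows "length (nbrs ! u) = 3" "distinct (nbrs ! u)" "u \<notin> set (nbrs ! u)"
    "\<And>k. k < 3 \<Longrightarrow> nbrs ! u ! k < 20" "\<And>k. k < 3 \<Longrightarrow> corner_face ! u ! k < 12"
  using nbrs_corner_ok_all assms unfolding nbrs_ok_def by auto

lemma set_nbrs: "u < 20 \<Longrightarrow> set (nbrs ! u) = {nbrs ! u ! 0, nbrs ! u ! 1, nbrs ! u ! 2}"
  using nbrs_facts(1)[of u] by (auto simp: set_conv_nth less_3_cases)

lemma nbrs_less: "u < 20 \<Longrightarrow> x \<in> set (nbrs ! u) \<Longrightarrow> x < 20"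
  using set_nbrs nbrs_facts(4) by auto

lemma vert_diff_cone:
  assumes "u < 20" "v < 20" "u \<noteq> v"
  shows "vert v - vert u =
    (\<Sum>k<3. zphi_real (cone_cert ! u ! v ! k) *\<^sub>R (vert (nbrs ! u ! k) - vert u))"
proof -
  have "zvec_real (zvec_sub (vert_coords ! v) (vert_coords ! u)) = zvec_real (cone_comb u v)"
    using cone_ok_all assms unfolding cone_ok_def by simp
  then show ?thesis
    by (simp add: cone_comb_def zvec_real_add zvec_real_scale zvec_real_sub vert_def eval_nat_numeral add.assoc)
qed

lemma cone_cert_sign:
  assumes "u < 20" "v < 20" "u \<noteq> v" "k < 3"
  shows "zphi_real (cone_cert ! u ! v ! k) \<ge> 0"
    "cone_cert ! u ! v ! k \<noteq> (0, 0) \<Longrightarrow> zphi_real (cone_cert ! u ! v ! k) > 0"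
proof -
  have "cone_ok u v"
    using cone_ok_all assms(1-3) by blast
  then have "cone_cert ! u ! v ! k = (0, 0) \<or> zphi_pos (cone_cert ! u ! v ! k)"
    using assms(4) unfolding cone_ok_def by blast
  then show "zphi_real (cone_cert ! u ! v ! k) \<ge> 0"
    "cone_cert ! u ! v ! k \<noteq> (0, 0) \<Longrightarrow> zphi_real (cone_cert ! u ! v ! k) > 0"
    using zphi_pos_imp_pos[of "cone_cert ! u ! v ! k"] by auto
qed

lemma set_cert_support:
  "set (cert_support u v) = {nbrs ! u ! k | k. k < 3 \<and> cone_cert ! u ! v ! k \<noteq> (0, 0)}"
proof -
  have "{nbrs ! u ! k | k. k < 3 \<and> cone_cert ! u ! v ! k \<noteq> (0, 0)} =
      (\<lambda>k. nbrs ! u ! k) ` {k \<in> {0, 1, 2}. cone_cert ! u ! v ! k \<noteq> (0, 0)}"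
    by (auto simp: less_3_cases)
  then show ?thesis
    unfolding cert_support_def by auto
qed

lemma length_cert_support_le_1:
  assumes "k < 3" "k' < 3" "k \<noteq> k'" "cone_cert ! u ! v ! k = (0, 0)" "cone_cert ! u ! v ! k' = (0, 0)"
  shows "length (cert_support u v) \<le> 1"
proof -
  have "k \<in> {0, 1, 2}" "k' \<in> {0, 1, 2}"
    using assms(1,2) by auto
  then show ?thesis
    using assms(3-5) unfolding cert_support_def by auto
qed

lemma distinct_cert_support: "u < 20 \<Longrightarrow> distinct (cert_support u v)"
  using nbrs_facts(1,2)[of u] unfolding cert_support_def
  by (auto simp: distinct_map inj_on_def nth_eq_iff_index_eq)

lemma cert_support_subset_nbrs: "u < 20 \<Longrightarrow> set (cert_support u v) \<subseteq> set (nbrs ! u)"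
  unfolding set_cert_support using set_nbrs by (auto simp: less_3_cases)

lemma cone_support_level:
  assumes le: "\<forall>i<20. n \<bullet> vert i \<le> c"
    and u: "u < 20" "n \<bullet> vert u = c" and v: "v < 20" "n \<bullet> vert v = c" and "u \<noteq> v"
    and k: "k < 3" "cone_cert ! u ! v ! k \<noteq> (0, 0)"
  shows "n \<bullet> vert (nbrs ! u ! k) = c"
proof -
  define t where "t j = zphi_real (cone_cert ! u ! v ! j) * (c - n \<bullet> vert (nbrs ! u ! j))" for j
  have t_nonneg: "0 \<le> t j" if "j \<in> {..<3}" for j
    using that le nbrs_facts(4)[OF u(1)] cone_cert_sign(1)[OF u(1) v(1) \<open>u \<noteq> v\<close>]
    unfolding t_def by simp
  have "(\<Sum>j<3. t j) = (\<Sum>j<3. zphi_real (cone_cert ! u ! v ! j) * c)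
      - (\<Sum>j<3. zphi_real (cone_cert ! u ! v ! j) * (n \<bullet> vert (nbrs ! u ! j)))"
    unfolding t_def by (simp add: sum_subtractf right_diff_distrib)
  also have "\<dots> = - (n \<bullet> (vert v - vert u))"
    unfolding vert_diff_cone[OF u(1) v(1) \<open>u \<noteq> v\<close>]
    by (simp add: inner_sum_right inner_diff_right sum_subtractf right_diff_distrib u(2))
  also have "\<dots> = 0"
    using u v by (simp add: inner_diff_right)
  finally have "(\<Sum>j<3. t j) = 0" .
  then have "t k = 0"
    using sum_nonneg_eq_0_iff[of "{..<3}" t] t_nonneg k(1) by simp
  then show ?thesis
    using cone_cert_sign(2)[OF u(1) v(1) \<open>u \<noteq> v\<close> k] unfolding t_def by simp
qed

lemma cone_not_all_nbrs_level:
  assumes le: "\<forall>i<20. n \<bullet> vert i \<le> c" and "n \<noteq> 0" and u: "u < 20" "n \<bullet> vert u = c"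
  shows "\<exists>k<3. n \<bullet> vert (nbrs ! u ! k) \<noteq> c"
proof (rule ccontr)
  assume "\<not> ?thesis"
  then have nbrs_level: "n \<bullet> (vert (nbrs ! u ! k) - vert u) = 0" if "k < 3" for k
    using that u(2) by (simp add: inner_diff_right)
  have level: "n \<bullet> vert v = c" if "v < 20" for v
  proof (cases "v = u")
    case False
    have "n \<bullet> (vert v - vert u) = 0"
      unfolding vert_diff_cone[OF u(1) that False[symmetric]]
      by (simp add: inner_sum_right nbrs_level)
    then show ?thesis
      using u(2) by (simp add: inner_diff_right)
  qed (use u in simp)
  \<comment> \<open>the cube vertices 0, 1, 2, 7 are affinely independent\<close>
  have "n \<bullet> vert 0 = c" "n \<bullet> vert 1 = c" "n \<bullet> vert 2 = c" "n \<bullet> vert 7 = c"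
    using level by auto
  then have "n $ 1 = 0 \<and> n $ 2 = 0 \<and> n $ 3 = 0"
    unfolding vert_eq_vector by (simp add: inner_vec_def sum_3)
  then show False
    using \<open>n \<noteq> 0\<close> by (simp add: vec_eq_iff forall_3)
qed

definition cone_closed :: "nat set \<Rightarrow> bool" where
  "cone_closed T \<longleftrightarrow> T \<subseteq> {..<20} \<and>
     (\<forall>u\<in>T. \<forall>v\<in>T. \<forall>k<3. u \<noteq> v \<and> cone_cert ! u ! v ! k \<noteq> (0, 0) \<longrightarrow> nbrs ! u ! k \<in> T) \<and>
     (\<forall>u\<in>T. \<exists>k<3. nbrs ! u ! k \<notin> T)"

lemma cone_closed_level_set:
  assumes "n \<noteq> 0" "\<forall>i<20. n \<bullet> vert i \<le> c"
  shows "cone_closed {i. i < 20 \<and> n \<bullet> vert i = c}"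
proof -
  have "\<exists>k<3. nbrs ! u ! k \<notin> {i. i < 20 \<and> n \<bullet> vert i = c}" if "u < 20" "n \<bullet> vert u = c" for u
    using cone_not_all_nbrs_level[OF assms(2,1) that] by blast
  then show ?thesis
    unfolding cone_closed_def using cone_support_level[OF assms(2)] nbrs_facts(4) by auto
qed

lemma cone_closed_support:
  assumes "cone_closed T" "u \<in> T" "v \<in> T" "u \<noteq> v"
  shows "set (cert_support u v) \<subseteq> T"
  using assms unfolding cone_closed_def set_cert_support by blast

lemma cone_closed_corner:
  assumes T: "cone_closed T" and x: "x \<in> T" and k0: "k0 < 3" "nbrs ! x ! k0 \<notin> T"
    and ab: "nbrs ! x ! ((k0 + 1) mod 3) \<in> T" "nbrs ! x ! ((k0 + 2) mod 3) \<in> T"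
  shows "T = set (pentagons ! (corner_face ! x ! k0))"
proof -
  define a b j where "a = nbrs ! x ! ((k0 + 1) mod 3)" and "b = nbrs ! x ! ((k0 + 2) mod 3)"
    and "j = corner_face ! x ! k0"
  have x20: "x < 20"
    using T x unfolding cone_closed_def by auto
  have "(k0 + 1) mod 3 \<noteq> (k0 + 2) mod 3"
    by presburger
  then have "a \<noteq> b"
    using nbrs_facts(1,2)[OF x20] unfolding a_def b_def by (simp add: nth_eq_iff_index_eq)
  have corner: "x \<in> set (pentagons ! j)"
    "set (pentagons ! j) \<subseteq> {x, a, b} \<union> set (cert_support a b) \<union> set (cert_support b a)"
    using nbrs_corner_ok_all x20 k0(1) unfolding corner_ok_def j_def a_def b_def by auto
  have "set (pentagons ! j) \<subseteq> T"
    using corner(2) cone_closed_support[OF T _ _ \<open>a \<noteq> b\<close>] cone_closed_support[OF T _ _ \<open>a \<noteq> b\<close>[symmetric]]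
      ab x unfolding a_def[symmetric] b_def[symmetric] by blast
  moreover have "z \<in> set (pentagons ! j)" if z: "z \<in> T" for z
  proof (rule ccontr)
    assume z_out: "z \<notin> set (pentagons ! j)"
    then have "x \<noteq> z" "z < 20"
      using corner(1) z T unfolding cone_closed_def by auto
    then have "cone_cert ! x ! z ! k0 \<noteq> (0, 0)"
      using cone_ok_all x20 z_out k0(1) unfolding cone_ok_def j_def by blast
    then show False
      using T x z k0 \<open>x \<noteq> z\<close> unfolding cone_closed_def by blast
  qed
  ultimately show ?thesis
    unfolding j_def by blast
qed

lemma cone_closed_pair:
  assumes T: "cone_closed T" and x: "x \<in> T" "y \<in> T" "x \<noteq> y"
  shows "y \<in> set (nbrs ! x) \<or> (\<exists>j<12. T = set (pentagons ! j))"
proof -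
  have x20: "x < 20" "y < 20"
    using T x unfolding cone_closed_def by auto
  obtain k0 where k0: "k0 < 3" "nbrs ! x ! k0 \<notin> T"
    using T x unfolding cone_closed_def by blast
  then have cert_k0: "cone_cert ! x ! y ! k0 = (0, 0)"
    using T x unfolding cone_closed_def by blast
  define k1 k2 where "k1 = (k0 + 1) mod 3" and "k2 = (k0 + 2) mod 3"
  have k12: "k1 < 3" "k2 < 3" "k1 \<noteq> k0" "k2 \<noteq> k0"
    unfolding k1_def k2_def by presburger+
  show ?thesis
  proof (cases "cone_cert ! x ! y ! k1 \<noteq> (0, 0) \<and> cone_cert ! x ! y ! k2 \<noteq> (0, 0)")
    case False
    then have "length (cert_support x y) \<le> 1"
      using length_cert_support_le_1[OF k0(1) k12(1) k12(3)[symmetric] cert_k0]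
        length_cert_support_le_1[OF k0(1) k12(2) k12(4)[symmetric] cert_k0] by blast
    then show ?thesis
      using cone_ok_all x20 x(3) unfolding cone_ok_def by blast
  next
    case True
    then have "nbrs ! x ! k1 \<in> T" "nbrs ! x ! k2 \<in> T"
      using T x k12 unfolding cone_closed_def by blast+
    then show ?thesis
      using cone_closed_corner[OF T x(1) k0] nbrs_facts(5)[OF x20(1) k0(1)] unfolding k1_def k2_def by blast
  qed
qed

lemma obtain_three_elems:
  assumes "finite T" "3 \<le> card T"
  obtains x y z where "x \<in> T" "y \<in> T" "z \<in> T" "x \<noteq> y" "x \<noteq> z" "y \<noteq> z"
proof -
  obtain S where "S \<subseteq> T" "card S = 3"
    using assms obtain_subset_with_card_n by metis
  then show ?thesis
    using that by (auto simp: card_3_iff)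
qed

lemma cone_closed_pentagon:
  assumes T: "cone_closed T" and "3 \<le> card T"
  shows "\<exists>j<12. T = set (pentagons ! j)"
proof (rule ccontr)
  assume no_pentagon: "\<not> ?thesis"
  have "finite T"
    using T unfolding cone_closed_def by (blast intro: finite_subset)
  then obtain x y z where xyz: "x \<in> T" "y \<in> T" "z \<in> T" "x \<noteq> y" "x \<noteq> z" "y \<noteq> z"
    using obtain_three_elems assms(2) by blast
  then have "y \<in> set (nbrs ! x)" "z \<in> set (nbrs ! x)" "z \<in> set (nbrs ! y)"
    using cone_closed_pair[OF T] no_pentagon by meson+
  moreover have "x < 20"
    using T xyz unfolding cone_closed_def by auto
  ultimately show False
    using nbrs_corner_ok_all unfolding corner_ok_def by blast
qed

lemma exposed_face_level_set:
  assumes "exposed_face dodeca_V F"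
  obtains n c where "n \<noteq> 0" "\<forall>i<20. n \<bullet> vert i \<le> c" "F = vert ` {i. i < 20 \<and> n \<bullet> vert i = c}"
proof -
  obtain n c where nc: "n \<noteq> 0" "\<forall>v\<in>dodeca_V. n \<bullet> v \<le> c" "F = {v\<in>dodeca_V. n \<bullet> v = c}"
    using assms unfolding exposed_face_def by blast
  show ?thesis
    using that[of n c] nc vert_in_dodeca_V unfolding dodeca_V_eq by auto
qed

lemma dodeca_face_pentagon:
  assumes "F \<in> dodeca_faces"
  shows "\<exists>j<12. F = vert ` set (pentagons ! j)"
proof -
  obtain n c where nc: "n \<noteq> 0" "\<forall>i<20. n \<bullet> vert i \<le> c" "F = vert ` {i. i < 20 \<and> n \<bullet> vert i = c}"
    using assms exposed_face_level_set unfolding dodeca_faces_def by blast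
  define T where "T = {i. i < 20 \<and> n \<bullet> vert i = c}"
  have "card F = card T"
    unfolding nc(3) T_def[symmetric] by (rule card_image) (auto intro: inj_on_subset[OF inj_on_vert] simp: T_def)
  then have "3 \<le> card T"
    using assms unfolding dodeca_faces_def by simp
  moreover have "cone_closed T"
    unfolding T_def using nc(1,2) by (rule cone_closed_level_set)
  ultimately obtain j where "j < 12" "T = set (pentagons ! j)"
    using cone_closed_pentagon by blast
  then show ?thesis
    using nc(3) unfolding T_def by blast
qed

lemma dodeca_oedge_nbrs:
  assumes "(p, q) \<in> dodeca_oedges"
  shows "\<exists>i<20. \<exists>j\<in>set (nbrs ! i). p = vert i \<and> q = vert j"
proof -
  obtain n c where nc: "n \<noteq> 0" "\<forall>i<20. n \<bullet> vert i \<le> c" "{p, q} = vert ` {i. i < 20 \<and> n \<bullet> vert i = c}"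
    using assms exposed_face_level_set unfolding dodeca_oedges_def by blast
  define T where "T = {i. i < 20 \<and> n \<bullet> vert i = c}"
  have T: "cone_closed T" "T \<subseteq> {..<20}"
    using cone_closed_level_set[OF nc(1,2)] unfolding T_def by auto
  have "p \<in> vert ` T" "q \<in> vert ` T"
    using nc(3) unfolding T_def by auto
  then obtain i j where ij: "i \<in> T" "j \<in> T" "p = vert i" "q = vert j"
    by blast
  have i20: "i < 20" "j < 20"
    using ij T(2) by auto
  have "i \<noteq> j"
    using assms ij unfolding dodeca_oedges_def by auto
  have "x \<in> {i, j}" if "x \<in> T" for x
  proof -
    have "vert x \<in> {vert i, vert j}"
      using that nc(3) ij unfolding T_def by blast
    then show ?thesis
      using vert_eq_iff that T(2) i20 by auto
  qed
  then have "set (cert_support i j) \<subseteq> {j}"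
    using cone_closed_support[OF T(1) ij(1,2) \<open>i \<noteq> j\<close>] cert_support_subset_nbrs[OF i20(1)]
      nbrs_facts(3)[OF i20(1)] by blast
  then have "length (cert_support i j) \<le> card {j}"
    using distinct_cert_support[OF i20(1)] by (metis card_mono distinct_card finite.emptyI finite.insertI)
  then have "j \<in> set (nbrs ! i)"
    using cone_ok_all i20 \<open>i \<noteq> j\<close> unfolding cone_ok_def by simp
  then show ?thesis
    using ij i20 by blast
qed

lemma exposed_face_vert_image:
  assumes I: "I \<subseteq> {..<20}" "i \<in> I" "m0 < 20" "m0 \<notin> I"
    and eq: "\<And>m. m \<in> I \<Longrightarrow> n \<bullet> vert m = c" and lt: "\<And>m. m < 20 \<Longrightarrow> m \<notin> I \<Longrightarrow> n \<bullet> vert m < c"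
  shows "exposed_face dodeca_V (vert ` I)"
proof -
  have "n \<noteq> 0"
    using lt[OF I(3,4)] eq[OF I(2)] by auto
  moreover have "\<forall>v\<in>dodeca_V. n \<bullet> v \<le> c"
  proof
    fix v assume "v \<in> dodeca_V"
    then obtain m where "m < 20" "v = vert m"
      unfolding dodeca_V_eq by blast
    then show "n \<bullet> v \<le> c"
      using eq lt by (cases "m \<in> I") (auto intro: less_imp_le)
  qed
  moreover have "vert ` I = {v\<in>dodeca_V. n \<bullet> v = c}"
  proof (intro equalityI subsetI)
    fix v assume "v \<in> vert ` I"
    then show "v \<in> {v\<in>dodeca_V. n \<bullet> v = c}"
      using eq I(1) vert_in_dodeca_V by auto
  next
    fix v assume v: "v \<in> {v\<in>dodeca_V. n \<bullet> v = c}"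
    then obtain m where "m < 20" "v = vert m"
      unfolding dodeca_V_eq by blast
    then show "v \<in> vert ` I"
      using v lt by (cases "m \<in> I") auto
  qed
  ultimately show ?thesis
    unfolding exposed_face_def by blast
qed

definition pentagon_sum :: "nat \<Rightarrow> zvec" where
  "pentagon_sum j = foldr zvec_add (map (\<lambda>m. vert_coords ! m) (pentagons ! j)) ((0, 0), (0, 0), (0, 0))"

text \<open>The pentagon is cut out by the plane orthogonal to the sum of its vertices.\<close>
definition pentagon_ok :: "nat \<Rightarrow> bool" where
  "pentagon_ok j \<longleftrightarrow> length (pentagons ! j) = 5 \<and> distinct (pentagons ! j) \<and>
     (\<forall>m\<in>set (pentagons ! j). m < 20) \<and>
     (\<forall>m<20. (m \<in> set (pentagons ! j) \<longrightarrow>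
          zvec_dot (pentagon_sum j) (vert_coords ! m) = zvec_dot (pentagon_sum j) (vert_coords ! (pentagons ! j ! 0))) \<and>
        (m \<notin> set (pentagons ! j) \<longrightarrow>
          zphi_pos (zphi_sub (zvec_dot (pentagon_sum j) (vert_coords ! (pentagons ! j ! 0)))
                              (zvec_dot (pentagon_sum j) (vert_coords ! m)))))"

lemma pentagon_ok_all: "\<forall>j<12. pentagon_ok j"
  by (simp only: pentagon_ok_def pentagon_sum_def all_less_expand)
    (simp add: table_nth zphi_eval)

lemma pentagon_facts:
  assumes "j < 12"
  shows "length (pentagons ! j) = 5" "distinct (pentagons ! j)" "set (pentagons ! j) \<subseteq> {..<20}"
  using pentagon_ok_all assms unfolding pentagon_ok_def by auto

lemma zvec_real_pentagon_sum: "j < 12 \<Longrightarrow> zvec_real (pentagon_sum j) = (\<Sum>w\<in>vert ` set (pentagons ! j). w)"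
proof -
  assume j: "j < 12"
  have "inj_on vert (set (pentagons ! j))"
    using pentagon_facts(3)[OF j] by (rule inj_on_subset[OF inj_on_vert])
  then have "(\<Sum>w\<in>vert ` set (pentagons ! j). w) = sum_list (map vert (pentagons ! j))"
    using pentagon_facts(2)[OF j] by (simp add: sum.reindex sum_list_distinct_conv_sum_set)
  moreover have "zvec_real (foldr zvec_add (map (\<lambda>m. vert_coords ! m) xs) ((0, 0), (0, 0), (0, 0)))
      = sum_list (map vert xs)" for xs
    by (induction xs) (simp_all add: zvec_real_add vert_def vec_eq_iff forall_3)
  ultimately show ?thesis
    unfolding pentagon_sum_def by simp
qed

lemma pentagon_in_dodeca_faces:
  assumes j: "j < 12"
  shows "vert ` set (pentagons ! j) \<in> dodeca_faces"
proof -
  define P where "P = pentagons ! j"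
  define n where "n = zvec_real (pentagon_sum j)"
  define c where "c = n \<bullet> vert (P ! 0)"
  have ok: "pentagon_ok j"
    using pentagon_ok_all j by blast
  have P20: "set P \<subseteq> {..<20}"
    using pentagon_facts(3)[OF j] unfolding P_def .
  have nv: "n \<bullet> vert m = zphi_real (zvec_dot (pentagon_sum j) (vert_coords ! m))" for m
    unfolding n_def vert_def by (simp add: zvec_real_inner)
  have eq: "n \<bullet> vert m = c" if "m \<in> set P" for m
  proof -
    have "zvec_dot (pentagon_sum j) (vert_coords ! m) = zvec_dot (pentagon_sum j) (vert_coords ! (P ! 0))"
      using ok that P20 unfolding pentagon_ok_def P_def by blast
    then show ?thesis
      unfolding c_def nv by simp
  qed
  have lt: "n \<bullet> vert m < c" if "m \<notin> set P" "m < 20" for m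
  proof -
    have "zphi_pos (zphi_sub (zvec_dot (pentagon_sum j) (vert_coords ! (P ! 0))) (zvec_dot (pentagon_sum j) (vert_coords ! m)))"
      using ok that unfolding pentagon_ok_def P_def by blast
    then show ?thesis
      unfolding c_def nv using zphi_pos_imp_pos by (fastforce simp: zphi_real_sub)
  qed
  have "\<not> {..<20} \<subseteq> set P"
  proof
    assume "{..<20} \<subseteq> set P"
    then have "card {..<20::nat} \<le> card (set P)"
      by (intro card_mono) simp_all
    then show False
      using pentagon_facts(1,2)[OF j] unfolding P_def by (simp add: distinct_card)
  qed
  then obtain m where "m < 20" "m \<notin> set P"
    by auto
  moreover have "P ! 0 \<in> set P"
    using pentagon_facts(1)[OF j] unfolding P_def by simp
  ultimately have "exposed_face dodeca_V (vert ` set P)"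
    using exposed_face_vert_image[OF P20] eq lt by blast
  moreover have "card (vert ` set P) = 5"
    using pentagon_facts(1,2)[OF j] inj_on_subset[OF inj_on_vert P20] unfolding P_def
    by (simp add: card_image distinct_card)
  ultimately show ?thesis
    unfolding dodeca_faces_def P_def by auto
qed

lemma dodeca_faces_eq: "dodeca_faces = (\<lambda>j. vert ` set (pentagons ! j)) ` {..<12}"
  using dodeca_face_pentagon pentagon_in_dodeca_faces by blast

text \<open>The edge \<open>{i, j}\<close> is cut out by the plane orthogonal to \<open>vert i + vert j\<close>.\<close>
definition edge_ok :: "nat \<Rightarrow> bool" where
  "edge_ok i \<longleftrightarrow> (\<forall>k<3.
     zvec_dot (zvec_add (vert_coords ! i) (vert_coords ! (nbrs ! i ! k))) (vert_coords ! (nbrs ! i ! k)) =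
       zvec_dot (zvec_add (vert_coords ! i) (vert_coords ! (nbrs ! i ! k))) (vert_coords ! i) \<and>
     (\<forall>m<20. m = i \<or> m = nbrs ! i ! k \<or>
        zphi_pos (zphi_sub (zvec_dot (zvec_add (vert_coords ! i) (vert_coords ! (nbrs ! i ! k))) (vert_coords ! i))
                           (zvec_dot (zvec_add (vert_coords ! i) (vert_coords ! (nbrs ! i ! k))) (vert_coords ! m)))))"

lemma edge_ok_all: "\<forall>i<20. edge_ok i"
  by (simp only: edge_ok_def all_less_expand) (simp add: table_nth zphi_eval)

lemma nbrs_in_dodeca_oedges:
  assumes i: "i < 20" and j: "j \<in> set (nbrs ! i)"
  shows "(vert i, vert j) \<in> dodeca_oedges"
proof -
  obtain k where k: "k < 3" "j = nbrs ! i ! k"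
    using j nbrs_facts(1)[OF i] by (metis in_set_conv_nth)
  have j20: "j < 20" and "i \<noteq> j"
    using nbrs_less[OF i j] nbrs_facts(3)[OF i] j by auto
  define n where "n = vert i + vert j"
  define c where "c = n \<bullet> vert i"
  have nv: "n \<bullet> vert m = zphi_real (zvec_dot (zvec_add (vert_coords ! i) (vert_coords ! j)) (vert_coords ! m))" for m
    unfolding n_def vert_def by (simp add: zvec_real_inner zvec_real_add[symmetric])
  have ok: "edge_ok i"
    using edge_ok_all i by blast
  have "zvec_dot (zvec_add (vert_coords ! i) (vert_coords ! j)) (vert_coords ! j) =
      zvec_dot (zvec_add (vert_coords ! i) (vert_coords ! j)) (vert_coords ! i)"
    using ok k(1) unfolding edge_ok_def k(2) by blast
  then have eq: "n \<bullet> vert j = c"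
    unfolding c_def nv by simp
  have lt: "n \<bullet> vert m < c" if "m \<noteq> i" "m \<noteq> j" "m < 20" for m
  proof -
    have "zphi_pos (zphi_sub (zvec_dot (zvec_add (vert_coords ! i) (vert_coords ! j)) (vert_coords ! i))
        (zvec_dot (zvec_add (vert_coords ! i) (vert_coords ! j)) (vert_coords ! m)))"
      using ok k(1) that unfolding edge_ok_def k(2) by blast
    then show ?thesis
      unfolding c_def nv using zphi_pos_imp_pos by (fastforce simp: zphi_real_sub)
  qed
  have "\<exists>m::nat. m < 20 \<and> m \<noteq> i \<and> m \<noteq> j"
    by presburger
  then obtain m :: nat where "m < 20" "m \<notin> {i, j}"
    by auto
  moreover have "n \<bullet> vert x = c" if "x \<in> {i, j}" for x
    using that eq unfolding c_def by blast
  moreover have "n \<bullet> vert x < c" if "x < 20" "x \<notin> {i, j}" for x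
    using that lt by blast
  moreover have "{i, j} \<subseteq> {..<20}"
    using i j20 by simp
  ultimately have "exposed_face dodeca_V (vert ` {i, j})"
    using exposed_face_vert_image[of "{i, j}" i m n c] by blast
  moreover have "vert i \<noteq> vert j"
    using vert_eq_iff[OF i j20] \<open>i \<noteq> j\<close> by simp
  ultimately show ?thesis
    unfolding dodeca_oedges_def by simp
qed

lemma dodeca_oedges_eq: "dodeca_oedges = {(vert i, vert j) | i j. i < 20 \<and> j \<in> set (nbrs ! i)}"
  using dodeca_oedge_nbrs nbrs_in_dodeca_oedges by fast

section \<open>Inscribed cubes\<close>

definition far_ok :: "nat \<Rightarrow> bool" where
  "far_ok i \<longleftrightarrow> (\<forall>j<20. i \<noteq> j \<longrightarrow> j \<notin> set (far_verts ! i) \<longrightarrow>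
     zphi_apart (zvec_dot (vert_coords ! i) (vert_coords ! j)) (-1, 0) \<and>
     zphi_apart (zvec_dot (vert_coords ! i) (vert_coords ! j)) (-3, 0))"

definition common_far :: "nat \<Rightarrow> nat \<Rightarrow> nat list" where
  "common_far i j = filter (\<lambda>m. m \<in> set (far_verts ! j)) (far_verts ! i)"

definition tetra_index :: "nat \<Rightarrow> nat \<Rightarrow> nat" where
  "tetra_index i j = hd (filter (\<lambda>k. i \<in> set (tetrahedra ! k) \<and> j \<in> set (tetrahedra ! k)) [0..<10])"

definition far_triangle_ok :: "nat \<Rightarrow> bool" where
  "far_triangle_ok i \<longleftrightarrow> (\<forall>j\<in>set (far_verts ! i). common_far i j = [] \<or>
     (length (common_far i j) = 2 \<and> tetra_index i j < 10 \<and>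
      set (tetrahedra ! tetra_index i j) = {i, j, common_far i j ! 0, common_far i j ! 1}))"

lemma far_ok_all: "\<forall>i<20. far_ok i"
  by (simp only: far_ok_def all_less_expand) (simp add: table_nth zphi_eval)

lemma far_triangle_ok_all: "\<forall>i<20. far_triangle_ok i"
  by (simp only: far_triangle_ok_def all_less_expand)
    (simp add: table_nth common_far_def tetra_index_def upt_zero_numeral pred_numeral_simps insert_commute)

lemma tetrahedra_facts:
  "\<forall>k<10. length (tetrahedra ! k) = 4 \<and> distinct (tetrahedra ! k) \<and> set (tetrahedra ! k) \<subseteq> {..<20}"
  by (simp only: all_less_expand) (simp add: table_nth)

lemma far_vertsI:
  assumes "i < 20" "j < 20" "i \<noteq> j" "vert i \<bullet> vert j = -1 \<or> vert i \<bullet> vert j = -3"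
  shows "j \<in> set (far_verts ! i)"
proof (rule ccontr)
  assume "j \<notin> set (far_verts ! i)"
  then have "zphi_real (zvec_dot (vert_coords ! i) (vert_coords ! j)) \<noteq> zphi_real (-1, 0)"
    "zphi_real (zvec_dot (vert_coords ! i) (vert_coords ! j)) \<noteq> zphi_real (-3, 0)"
    using far_ok_all assms(1-3) zphi_apart_imp_neq unfolding far_ok_def by blast+
  then show False
    using assms(4) by (simp add: vert_inner)
qed

lemma pairwise_far_tetrahedron:
  assumes T: "T \<subseteq> {..<20}" "card T = 4"
    and far: "\<forall>i\<in>T. \<forall>j\<in>T. i \<noteq> j \<longrightarrow> j \<in> set (far_verts ! i)"
  shows "\<exists>k<10. T = set (tetrahedra ! k)"
proof -
  have "finite T" "3 \<le> card T"
    using T finite_subset by auto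
  then obtain x y where xy: "x \<in> T" "y \<in> T" "x \<noteq> y"
    using obtain_three_elems by metis
  have x20: "x < 20"
    using xy T by auto
  have y_far: "y \<in> set (far_verts ! x)"
    using far xy by blast
  have sub: "T \<subseteq> {x, y} \<union> set (common_far x y)"
    using far xy unfolding common_far_def by auto
  show ?thesis
  proof (cases "common_far x y = []")
    case True
    then have "card T \<le> card {x, y}"
      using sub by (intro card_mono) auto
    then show ?thesis
      using T(2) xy(3) by simp
  next
    case False
    then have l2: "length (common_far x y) = 2" and k: "tetra_index x y < 10"
      and st: "set (tetrahedra ! tetra_index x y) = {x, y, common_far x y ! 0, common_far x y ! 1}"
      using far_triangle_ok_all x20 y_far unfolding far_triangle_ok_def by auto
    have "set (common_far x y) = {common_far x y ! 0, common_far x y ! 1}"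
      using l2 by (auto simp: set_conv_nth less_Suc_eq numeral_2_eq_2)
    then have "T \<subseteq> set (tetrahedra ! tetra_index x y)"
      using sub st by auto
    moreover have "card (set (tetrahedra ! tetra_index x y)) = 4"
      using tetrahedra_facts k by (simp add: distinct_card)
    ultimately show ?thesis
      using T(2) k by (metis card_subset_eq finite_set)
  qed
qed

lemma orthogonal_triple_zero:
  fixes a e1 e2 e3 :: "real^3"
  assumes "e1 \<noteq> 0" "e2 \<noteq> 0" "e3 \<noteq> 0" "e1 \<bullet> e2 = 0" "e2 \<bullet> e3 = 0" "e1 \<bullet> e3 = 0"
    "a \<bullet> e1 = 0" "a \<bullet> e2 = 0" "a \<bullet> e3 = 0"
  shows "a = 0"
proof -
  define B where "B = {e1, e2, e3}"
  have "e1 \<noteq> e2" "e2 \<noteq> e3" "e1 \<noteq> e3"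
    using assms by (auto simp: inner_eq_zero_iff)
  then have "card B = 3"
    unfolding B_def by auto
  moreover have "pairwise orthogonal B"
    unfolding B_def pairwise_def orthogonal_def using assms by (auto simp: inner_commute)
  then have "independent B"
    using pairwise_orthogonal_independent assms unfolding B_def by auto
  ultimately have "a \<in> span B"
    using card_ge_dim_independent[of B UNIV] by auto
  then have "orthogonal a a"
    by (rule orthogonal_to_span) (use assms in \<open>auto simp: B_def orthogonal_def\<close>)
  then show ?thesis
    by (simp add: orthogonal_def)
qed

lemma inner_cube_vertices:
  fixes a e1 e2 e3 :: "'a::real_inner"
  assumes "e1 \<bullet> e2 = 0" "e2 \<bullet> e3 = 0" "e1 \<bullet> e3 = 0" "e2 \<bullet> e2 = e1 \<bullet> e1" "e3 \<bullet> e3 = e1 \<bullet> e1"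
  shows "(a + s1 *\<^sub>R e1 + s2 *\<^sub>R e2 + s3 *\<^sub>R e3) \<bullet> (a + t1 *\<^sub>R e1 + t2 *\<^sub>R e2 + t3 *\<^sub>R e3)
    = a \<bullet> a + (s1 * t1 + s2 * t2 + s3 * t3) * (e1 \<bullet> e1)
      + (s1 + t1) * (a \<bullet> e1) + (s2 + t2) * (a \<bullet> e2) + (s3 + t3) * (a \<bullet> e3)"
proof -
  have "e2 \<bullet> e1 = 0" "e3 \<bullet> e2 = 0" "e3 \<bullet> e1 = 0" "e1 \<bullet> a = a \<bullet> e1" "e2 \<bullet> a = a \<bullet> e2" "e3 \<bullet> a = a \<bullet> e3"
    using assms by (simp_all add: inner_commute)
  then show ?thesis
    using assms by (simp add: inner_add_left inner_add_right algebra_simps)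
qed

text \<open>A cube inscribed in the dodecahedron lies on its circumsphere of radius \<open>sqrt 3\<close>,
  so it is centred at \<open>0\<close> and has unit half-edges.\<close>
lemma inscribed_cube_coords:
  assumes S: "S \<in> inscribed_cubes"
  obtains g :: "real \<Rightarrow> real \<Rightarrow> real \<Rightarrow> pt" where
    "\<And>x. x \<in> S \<longleftrightarrow> (\<exists>s1 s2 s3. s1 \<in> {-1, 1} \<and> s2 \<in> {-1, 1} \<and> s3 \<in> {-1, 1} \<and> x = g s1 s2 s3)"
    "\<And>s1 s2 s3 t1 t2 t3. g s1 s2 s3 \<bullet> g t1 t2 t3 = s1 * t1 + s2 * t2 + s3 * t3"
proof -
  obtain a e1 e2 e3 where e: "e1 \<noteq> 0" "norm e1 = norm e2" "norm e2 = norm e3"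
      "e1 \<bullet> e2 = 0" "e2 \<bullet> e3 = 0" "e1 \<bullet> e3 = 0"
    and S_eq: "S = {a + s1 *\<^sub>R e1 + s2 *\<^sub>R e2 + s3 *\<^sub>R e3 | s1 s2 s3.
      s1 \<in> {-1, 1} \<and> s2 \<in> {-1, 1} \<and> s3 \<in> {-1, 1}}"
    using S unfolding inscribed_cubes_def is_cube_vertex_set_def by blast
  define g where "g s1 s2 s3 = a + s1 *\<^sub>R e1 + s2 *\<^sub>R e2 + s3 *\<^sub>R e3" for s1 s2 s3 :: real
  have "e2 \<bullet> e2 = e1 \<bullet> e1" "e3 \<bullet> e3 = e1 \<bullet> e1"
    using e(2,3) unfolding power2_norm_eq_inner[symmetric] by simp_all
  then have gg: "g s1 s2 s3 \<bullet> g t1 t2 t3 = a \<bullet> a + (s1 * t1 + s2 * t2 + s3 * t3) * (e1 \<bullet> e1)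
      + (s1 + t1) * (a \<bullet> e1) + (s2 + t2) * (a \<bullet> e2) + (s3 + t3) * (a \<bullet> e3)" for s1 s2 s3 t1 t2 t3
    unfolding g_def by (rule inner_cube_vertices[OF e(4-6)])
  have Sg: "x \<in> S \<longleftrightarrow> (\<exists>s1 s2 s3. s1 \<in> {-1, 1} \<and> s2 \<in> {-1, 1} \<and> s3 \<in> {-1, 1} \<and> x = g s1 s2 s3)" for x
    unfolding S_eq g_def by blast
  have n3: "g s1 s2 s3 \<bullet> g s1 s2 s3 = 3" if "s1 \<in> {-1, 1}" "s2 \<in> {-1, 1}" "s3 \<in> {-1, 1}" for s1 s2 s3
    using Sg[THEN iffD2] that S dodeca_V_norm unfolding inscribed_cubes_def by blast
  have "a \<bullet> a + 3 * (e1 \<bullet> e1) + 2 * (a \<bullet> e1) + 2 * (a \<bullet> e2) + 2 * (a \<bullet> e3) = 3"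
    "a \<bullet> a + 3 * (e1 \<bullet> e1) - 2 * (a \<bullet> e1) + 2 * (a \<bullet> e2) + 2 * (a \<bullet> e3) = 3"
    "a \<bullet> a + 3 * (e1 \<bullet> e1) + 2 * (a \<bullet> e1) - 2 * (a \<bullet> e2) + 2 * (a \<bullet> e3) = 3"
    "a \<bullet> a + 3 * (e1 \<bullet> e1) + 2 * (a \<bullet> e1) + 2 * (a \<bullet> e2) - 2 * (a \<bullet> e3) = 3"
    using n3[of 1 1 1] n3[of "-1" 1 1] n3[of 1 "-1" 1] n3[of 1 1 "-1"] gg by simp_all
  then have ae: "a \<bullet> e1 = 0" "a \<bullet> e2 = 0" "a \<bullet> e3 = 0" and aa: "a \<bullet> a + 3 * (e1 \<bullet> e1) = 3"
    by linarith+
  have "e2 \<noteq> 0" "e3 \<noteq> 0"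
    using e(1-3) by auto
  then have "a = 0"
    using orthogonal_triple_zero[OF e(1) _ _ e(4-6) ae] by blast
  then have "g s1 s2 s3 \<bullet> g t1 t2 t3 = s1 * t1 + s2 * t2 + s3 * t3" for s1 s2 s3 t1 t2 t3
    using gg[of s1 s2 s3 t1 t2 t3] ae aa by simp
  then show ?thesis
    using that Sg by blast
qed

lemma sign_triple_inner:
  fixes s1 s2 s3 t1 t2 t3 :: real
  assumes "s1 \<in> {-1, 1}" "s2 \<in> {-1, 1}" "s3 \<in> {-1, 1}" "t1 \<in> {-1, 1}" "t2 \<in> {-1, 1}" "t3 \<in> {-1, 1}"
  shows "s1 * t1 + s2 * t2 + s3 * t3 \<in> {-3, -1, 1} \<or> (s1 = t1 \<and> s2 = t2 \<and> s3 = t3)"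
  using assms by auto

lemma cube_nonadjacent_inner:
  assumes S: "S \<in> inscribed_cubes" and uv: "u \<in> S" "v \<in> S" "u \<noteq> v" and "\<not> cube_adj S u v"
  shows "u \<bullet> v = -1 \<or> u \<bullet> v = -3"
proof -
  obtain g where Sg: "\<And>x. x \<in> S \<longleftrightarrow> (\<exists>s1 s2 s3. s1 \<in> {-1, 1} \<and> s2 \<in> {-1, 1} \<and> s3 \<in> {-1, 1} \<and> x = g s1 s2 s3)"
    and gdot: "\<And>s1 s2 s3 t1 t2 t3. g s1 s2 s3 \<bullet> g t1 t2 t3 = s1 * t1 + s2 * t2 + s3 * t3"
    using inscribed_cube_coords[OF S] by blast
  have inner_cases: "w \<bullet> w' \<in> {-3, -1, 1}" if w: "w \<in> S" "w' \<in> S" "w \<noteq> w'" for w w'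
  proof -
    obtain s1 s2 s3 where s: "s1 \<in> {-1, 1}" "s2 \<in> {-1, 1}" "s3 \<in> {-1, 1}" "w = g s1 s2 s3"
      using Sg[THEN iffD1, OF w(1)] by blast
    obtain t1 t2 t3 where t: "t1 \<in> {-1, 1}" "t2 \<in> {-1, 1}" "t3 \<in> {-1, 1}" "w' = g t1 t2 t3"
      using Sg[THEN iffD1, OF w(2)] by blast
    have "w \<bullet> w' = s1 * t1 + s2 * t2 + s3 * t3"
      using s(4) t(4) gdot by simp
    moreover have "\<not> (s1 = t1 \<and> s2 = t2 \<and> s3 = t3)"
      using s(4) t(4) w(3) by auto
    ultimately show ?thesis
      using sign_triple_inner[OF s(1-3) t(1-3)] by auto
  qed
  have norm3: "w \<bullet> w = 3" if w: "w \<in> S" for w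
  proof -
    obtain s1 s2 s3 where "s1 \<in> {-1, 1}" "s2 \<in> {-1, 1}" "s3 \<in> {-1, 1}" "w = g s1 s2 s3"
      using Sg[THEN iffD1, OF w] by blast
    then show ?thesis
      using gdot by auto
  qed
  have dist_sq: "dist w w' ^ 2 = 6 - 2 * (w \<bullet> w')" if "w \<in> S" "w' \<in> S" for w w'
    using norm3[OF that(1)] norm3[OF that(2)]
    by (simp add: dist_norm power2_norm_eq_inner inner_diff_left inner_diff_right inner_commute)
  have "u \<bullet> v \<noteq> 1"
  proof
    assume "u \<bullet> v = 1"
    have "dist u v \<le> dist w w'" if "w \<in> S" "w' \<in> S" "w \<noteq> w'" for w w'
    proof (rule power2_le_imp_le)
      show "dist u v ^ 2 \<le> dist w w' ^ 2"
        using dist_sq[OF uv(1,2)] dist_sq[OF that(1,2)] inner_cases[OF that] \<open>u \<bullet> v = 1\<close> by auto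
    qed simp
    then have "cube_adj S u v"
      using uv unfolding cube_adj_def by blast
    with \<open>\<not> cube_adj S u v\<close> show False ..
  qed
  then show ?thesis
    using inner_cases[OF uv] by auto
qed

lemma nonadjacent_cube_vertices_tetrahedron:
  assumes S: "S \<in> inscribed_cubes" and ES: "E \<subseteq> S" and c4: "card E = 4"
    and nadj: "\<forall>u\<in>E. \<forall>v\<in>E. \<not> cube_adj S u v"
  shows "\<exists>k<10. E = vert ` set (tetrahedra ! k)"
proof -
  have EV: "E \<subseteq> vert ` {..<20}" using S ES unfolding inscribed_cubes_def dodeca_V_eq by blast
  define T where "T = {i. i < 20 \<and> vert i \<in> E}"
  have ET: "E = vert ` T" using EV unfolding T_def by auto
  have Tsub: "T \<subseteq> {..<20}" unfolding T_def by auto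
  have "card E = card T" unfolding ET by (rule card_image) (meson Tsub inj_on_vert inj_on_subset)
  hence cT: "card T = 4" using c4 by simp
  have far: "\<forall>i\<in>T. \<forall>j\<in>T. i \<noteq> j \<longrightarrow> j \<in> set (far_verts ! i)"
  proof (intro ballI impI)
    fix i j assume i: "i \<in> T" and j: "j \<in> T" and ij: "i \<noteq> j"
    have i20: "i < 20" "j < 20" using i j T_def by auto
    have "vert i \<noteq> vert j" using vert_eq_iff[OF i20] ij by simp
    hence "vert i \<bullet> vert j = -1 \<or> vert i \<bullet> vert j = -3"
      using cube_nonadjacent_inner[OF S, of "vert i" "vert j"] ES nadj i j T_def by blast
    thus "j \<in> set (far_verts ! i)" using far_vertsI[OF i20 ij] by simp
  qed
  obtain k where "k < 10" "T = set (tetrahedra ! k)" using pairwise_far_tetrahedron[OF Tsub cT far] by blast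
  thus ?thesis using ET by blast
qed

section \<open>Chains mod 3\<close>

definition vert_edge_chain :: "nat \<times> nat \<Rightarrow> chain1" where
  "vert_edge_chain p = edge_chain (vert (fst p), vert (snd p))"

definition out_edges :: "nat list \<Rightarrow> (nat \<times> nat) list" where
  "out_edges vs = concat (map (\<lambda>i. map (\<lambda>j. (i, j)) (nbrs ! i)) vs)"

definition all_edges :: "(nat \<times> nat) list" where
  "all_edges = out_edges [0..<20]"

fun index_of :: "'a \<Rightarrow> 'a list \<Rightarrow> nat" where
  "index_of x [] = 0"
| "index_of x (y # ys) = (if x = y then 0 else Suc (index_of x ys))"

definition basis_index :: "nat \<times> nat \<Rightarrow> nat" where
  "basis_index p = (if p \<in> set edge_basis then index_of p edge_basis else index_of (prod.swap p) edge_basis)"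

definition basis_sign :: "nat \<times> nat \<Rightarrow> int" where
  "basis_sign p = (if p \<in> set edge_basis then 1 else -1)"

definition add_at :: "nat \<Rightarrow> int \<Rightarrow> int list \<Rightarrow> int list" where
  "add_at i x c = c[i := c ! i + x]"

fun edge_coords :: "(nat \<times> nat) list \<Rightarrow> int list" where
  "edge_coords [] = replicate 30 0"
| "edge_coords (p # ps) = add_at (basis_index p) (basis_sign p) (edge_coords ps)"

fun lincomb :: "int list \<Rightarrow> int list list \<Rightarrow> int list" where
  "lincomb (c # cs) (v # vs) = map2 (\<lambda>x y. c * x + y) v (lincomb cs vs)"
| "lincomb _ _ = replicate 30 0"

lemma all_edges_in_basis: "\<forall>p\<in>set all_edges. p \<in> set edge_basis \<or> prod.swap p \<in> set edge_basis"
  by (simp add: all_edges_def out_edges_def upt_zero_numeral pred_numeral_simps table_nth edge_basis_def)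

lemma distinct_all_edges: "distinct all_edges"
  by (simp add: all_edges_def out_edges_def upt_zero_numeral pred_numeral_simps table_nth)

lemma set_out_edges: "set (out_edges vs) = {(i, j). i \<in> set vs \<and> j \<in> set (nbrs ! i)}"
  unfolding out_edges_def by auto

lemma set_all_edges: "set all_edges = {(i, j). i < 20 \<and> j \<in> set (nbrs ! i)}"
  unfolding all_edges_def set_out_edges by auto

lemma inj_on_vert_pair: "inj_on (\<lambda>p. (vert (fst p), vert (snd p))) (set all_edges)"
proof (rule inj_onI)
  fix p q assume pq: "p \<in> set all_edges" "q \<in> set all_edges" "(vert (fst p), vert (snd p)) = (vert (fst q), vert (snd q))"
  then have "fst p < 20" "snd p < 20" "fst q < 20" "snd q < 20"
    unfolding set_all_edges using nbrs_less by auto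
  then show "p = q"
    using pq(3) vert_eq_iff by (simp add: prod_eq_iff)
qed

lemma index_of_nth: "x \<in> set ys \<Longrightarrow> index_of x ys < length ys \<and> ys ! index_of x ys = x"
  by (induction ys) auto

lemma length_edge_basis: "length edge_basis = 30"
  by (simp add: edge_basis_def)

lemma length_edge_coords: "length (edge_coords ps) = 30"
  by (induction ps) (simp_all add: add_at_def)

lemma vert_edge_chain_basis:
  assumes "p \<in> set all_edges"
  shows "vert_edge_chain p w = basis_sign p * vert_edge_chain (edge_basis ! basis_index p) w \<and> basis_index p < 30"
proof -
  obtain i j where p: "p = (i, j)" "i < 20" "j \<in> set (nbrs ! i)"
    using assms unfolding set_all_edges by auto
  have "vert i \<noteq> vert j"
    using p nbrs_less[of i j] nbrs_facts(3)[of i] vert_eq_iff by auto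
  then have swap: "edge_chain (vert j, vert i) w = - edge_chain (vert i, vert j) w"
    unfolding edge_chain_def by auto
  show ?thesis
  proof (cases "p \<in> set edge_basis")
    case True
    then show ?thesis
      using index_of_nth[OF True] length_edge_basis by (simp add: basis_index_def basis_sign_def)
  next
    case False
    then have "prod.swap p \<in> set edge_basis"
      using all_edges_in_basis assms by blast
    then show ?thesis
      using False index_of_nth[of "prod.swap p" edge_basis] length_edge_basis swap
      by (auto simp: basis_index_def basis_sign_def vert_edge_chain_def p)
  qed
qed

lemma sum_vert_edge_chain_edge_coords:
  assumes "set ps \<subseteq> set all_edges"
  shows "sum_list (map (\<lambda>p. vert_edge_chain p w) ps) = (\<Sum>k<30. edge_coords ps ! k * vert_edge_chain (edge_basis ! k) w)"
  using assms
proof (induction ps)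
  case Nil
  then show ?case
    by simp
next
  case (Cons p ps)
  have p: "vert_edge_chain p w = basis_sign p * vert_edge_chain (edge_basis ! basis_index p) w" "basis_index p < 30"
    using vert_edge_chain_basis Cons.prems by auto
  have "edge_coords (p # ps) ! k = edge_coords ps ! k + (if k = basis_index p then basis_sign p else 0)"
    if "k < 30" for k
    using that length_edge_coords[of ps] by (simp add: add_at_def nth_list_update)
  then have "(\<Sum>k<30. edge_coords (p # ps) ! k * vert_edge_chain (edge_basis ! k) w) =
      (\<Sum>k<30. edge_coords ps ! k * vert_edge_chain (edge_basis ! k) w
        + (if k = basis_index p then basis_sign p * vert_edge_chain (edge_basis ! k) w else 0))"
    by (intro sum.cong) (simp_all add: distrib_right)
  also have "\<dots> = (\<Sum>k<30. edge_coords ps ! k * vert_edge_chain (edge_basis ! k) w) + vert_edge_chain p w"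
    using p by (simp add: sum.distrib)
  finally show ?case
    using Cons by simp
qed

lemma sum_fun_apply: "(\<Sum>x\<in>A. f x) w = (\<Sum>x\<in>A. f x w)"
  by (induction A rule: infinite_finite_induct) auto

lemma vertex_star_sum:
  assumes "i < 20"
  shows "(\<Sum>y\<in>{y\<in>dodeca_oedges. fst y = vert i}. edge_chain y) w = sum_list (map (\<lambda>j. vert_edge_chain (i, j) w) (nbrs ! i))"
proof -
  have star: "{y\<in>dodeca_oedges. fst y = vert i} = (\<lambda>j. (vert i, vert j)) ` set (nbrs ! i)"
    unfolding dodeca_oedges_eq using vert_eq_iff assms by auto
  have "inj_on (\<lambda>j. (vert i, vert j)) (set (nbrs ! i))"
    using inj_on_subset[OF inj_on_vert] nbrs_less[OF assms] by (auto simp: inj_on_def)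
  then show ?thesis
    unfolding star sum_fun_apply using nbrs_facts(2)[OF assms]
    by (simp add: sum.reindex sum_list_distinct_conv_sum_set vert_edge_chain_def)
qed

lemma vertex_set_star_sum:
  assumes "set vs \<subseteq> {..<20}" "distinct vs"
  shows "(\<Sum>x\<in>vert ` set vs. \<Sum>y\<in>{y\<in>dodeca_oedges. fst y = x}. edge_chain y) w
    = sum_list (map (\<lambda>p. vert_edge_chain p w) (out_edges vs))"
proof -
  have "inj_on vert (set vs)"
    using assms(1) by (rule inj_on_subset[OF inj_on_vert])
  then have "(\<Sum>x\<in>vert ` set vs. \<Sum>y\<in>{y\<in>dodeca_oedges. fst y = x}. edge_chain y) w
      = (\<Sum>i\<in>set vs. (\<Sum>y\<in>{y\<in>dodeca_oedges. fst y = vert i}. edge_chain y) w)"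
    by (simp add: sum_fun_apply sum.reindex)
  also have "\<dots> = (\<Sum>i\<in>set vs. sum_list (map (\<lambda>j. vert_edge_chain (i, j) w) (nbrs ! i)))"
    by (intro sum.cong refl vertex_star_sum) (use assms(1) in auto)
  also have "\<dots> = sum_list (map (\<lambda>i. sum_list (map (\<lambda>j. vert_edge_chain (i, j) w) (nbrs ! i))) vs)"
    using assms(2) by (simp add: sum_list_distinct_conv_sum_set)
  also have "\<dots> = sum_list (map (\<lambda>p. vert_edge_chain p w) (out_edges vs))"
    unfolding out_edges_def by (induction vs) (simp_all add: comp_def)
  finally show ?thesis .
qed

definition pentagon_edges :: "nat \<Rightarrow> (nat \<times> nat) list" where
  "pentagon_edges j = filter (\<lambda>p. fst p \<in> set (pentagons ! j) \<and> snd p \<in> set (pentagons ! j) \<and>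
     zphi_pos (zvec_dot (zvec_cross (vert_coords ! fst p) (vert_coords ! snd p)) (pentagon_sum j))) all_edges"

definition pentagon_boundary_ok :: "nat \<Rightarrow> bool" where
  "pentagon_boundary_ok j \<longleftrightarrow> edge_coords (pentagon_edges j) = pentagon_coords ! j \<and>
     (\<forall>p\<in>set all_edges. fst p \<in> set (pentagons ! j) \<and> snd p \<in> set (pentagons ! j) \<longrightarrow>
        zphi_pos (zvec_dot (zvec_cross (vert_coords ! fst p) (vert_coords ! snd p)) (pentagon_sum j)) \<or>
        zphi_pos (zphi_sub (0, 0) (zvec_dot (zvec_cross (vert_coords ! fst p) (vert_coords ! snd p)) (pentagon_sum j))))"

lemma pentagon_boundary_ok_all: "\<forall>j<12. pentagon_boundary_ok j"
  by (simp only: pentagon_boundary_ok_def pentagon_edges_def pentagon_sum_def all_edges_def all_less_expand)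
    (simp add: table_nth out_edges_def upt_zero_numeral replicate_numeral pred_numeral_simps add_at_def basis_index_def
      basis_sign_def edge_basis_def zphi_eval)

lemma pentagon_oriented_edges:
  assumes j: "j < 12"
  defines "P \<equiv> pentagons ! j" and "pm \<equiv> \<lambda>p. (vert (fst p), vert (snd p))"
  shows "{(u, v). (u, v) \<in> dodeca_oedges \<and> u \<in> vert ` set P \<and> v \<in> vert ` set P
      \<and> cross3 u v \<bullet> (\<Sum>w\<in>vert ` set P. w) > 0} = pm ` set (pentagon_edges j)"
proof -
  have ok: "pentagon_boundary_ok j"
    using pentagon_boundary_ok_all j by blast
  have P20: "set P \<subseteq> {..<20}"
    using pentagon_facts(3)[OF j] unfolding P_def .
  have in_P: "i < 20 \<Longrightarrow> vert i \<in> vert ` set P \<longleftrightarrow> i \<in> set P" for i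
    using P20 vert_eq_iff by auto
  have cross_sign: "cross3 (vert a) (vert b) \<bullet> (\<Sum>w\<in>vert ` set P. w)
      = zphi_real (zvec_dot (zvec_cross (vert_coords ! a) (vert_coords ! b)) (pentagon_sum j))" for a b
    unfolding zvec_real_pentagon_sum[OF j, folded P_def, symmetric] vert_def zvec_real_cross zvec_real_inner
    by (simp add: inner_commute)
  show ?thesis
  proof (intro equalityI subsetI)
    fix y assume "y \<in> {(u, v). (u, v) \<in> dodeca_oedges \<and> u \<in> vert ` set P \<and> v \<in> vert ` set P
      \<and> cross3 u v \<bullet> (\<Sum>w\<in>vert ` set P. w) > 0}"
    then obtain u v where y: "y = (u, v)" "(u, v) \<in> dodeca_oedges" "u \<in> vert ` set P" "v \<in> vert ` set P"
      and pos: "cross3 u v \<bullet> (\<Sum>w\<in>vert ` set P. w) > 0"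
      by blast
    obtain a b where ab: "a < 20" "b \<in> set (nbrs ! a)" "u = vert a" "v = vert b"
      using y(2) unfolding dodeca_oedges_eq by blast
    have edge: "(a, b) \<in> set all_edges"
      using ab(1,2) unfolding set_all_edges by blast
    have in_face: "a \<in> set P" "b \<in> set P"
      using y(3,4) ab in_P nbrs_less by auto
    have "zphi_pos (zvec_dot (zvec_cross (vert_coords ! a) (vert_coords ! b)) (pentagon_sum j))"
    proof (rule ccontr)
      assume "\<not> ?thesis"
      then have "zphi_pos (zphi_sub (0, 0) (zvec_dot (zvec_cross (vert_coords ! a) (vert_coords ! b)) (pentagon_sum j)))"
        using ok edge in_face unfolding pentagon_boundary_ok_def P_def by auto
      then show False
        using pos zphi_pos_imp_pos unfolding ab(3,4) cross_sign by (fastforce simp: zphi_real_sub)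
    qed
    then have "(a, b) \<in> set (pentagon_edges j)"
      using edge in_face unfolding pentagon_edges_def P_def by simp
    then show "y \<in> pm ` set (pentagon_edges j)"
      unfolding y(1) ab(3,4) pm_def by force
  next
    fix y assume "y \<in> pm ` set (pentagon_edges j)"
    then obtain a b where y: "y = (vert a, vert b)" and ab: "(a, b) \<in> set all_edges" "a \<in> set P" "b \<in> set P"
      and pos: "zphi_pos (zvec_dot (zvec_cross (vert_coords ! a) (vert_coords ! b)) (pentagon_sum j))"
      unfolding pm_def pentagon_edges_def P_def by auto
    have "(vert a, vert b) \<in> dodeca_oedges"
      using ab(1) unfolding dodeca_oedges_eq set_all_edges by blast
    moreover have "cross3 (vert a) (vert b) \<bullet> (\<Sum>w\<in>vert ` set P. w) > 0"
      unfolding cross_sign using zphi_pos_imp_pos[OF pos] .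
    ultimately show "y \<in> {(u, v). (u, v) \<in> dodeca_oedges \<and> u \<in> vert ` set P \<and> v \<in> vert ` set P
      \<and> cross3 u v \<bullet> (\<Sum>w\<in>vert ` set P. w) > 0}"
      using ab(2,3) unfolding y by blast
  qed
qed

lemma face_boundary_pentagon:
  assumes j: "j < 12"
  shows "face_boundary (vert ` set (pentagons ! j)) w = (\<Sum>k<30. pentagon_coords ! j ! k * vert_edge_chain (edge_basis ! k) w)"
proof -
  have inj: "inj_on (\<lambda>p. (vert (fst p), vert (snd p))) (set (pentagon_edges j))"
    using inj_on_subset[OF inj_on_vert_pair] unfolding pentagon_edges_def by auto
  have sub: "set (pentagon_edges j) \<subseteq> set all_edges"
    unfolding pentagon_edges_def by auto
  have "face_boundary (vert ` set (pentagons ! j)) w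
      = (\<Sum>p\<in>set (pentagon_edges j). edge_chain (vert (fst p), vert (snd p)) w)"
    unfolding face_boundary_def pentagon_oriented_edges[OF j] sum_fun_apply sum.reindex[OF inj] by simp
  also have "\<dots> = sum_list (map (\<lambda>p. vert_edge_chain p w) (pentagon_edges j))"
    using distinct_all_edges unfolding pentagon_edges_def
    by (simp add: sum_list_distinct_conv_sum_set vert_edge_chain_def)
  also have "\<dots> = (\<Sum>k<30. pentagon_coords ! j ! k * vert_edge_chain (edge_basis ! k) w)"
    using sum_vert_edge_chain_edge_coords[OF sub] pentagon_boundary_ok_all j
    unfolding pentagon_boundary_ok_def by simp
  finally show ?thesis .
qed

lemma lincomb_nth:
  assumes "length cs = length vs" "\<forall>v\<in>set vs. length v = 30" "k < 30"
  shows "lincomb cs vs ! k = (\<Sum>j<length cs. cs ! j * vs ! j ! k) \<and> length (lincomb cs vs) = 30"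
  using assms
proof (induction cs vs rule: lincomb.induct)
  case (1 c cs v vs)
  then have IH: "lincomb cs vs ! k = (\<Sum>j<length cs. cs ! j * vs ! j ! k)" "length (lincomb cs vs) = 30"
    and "length v = 30"
    by auto
  have "lincomb (c # cs) (v # vs) ! k = c * v ! k + lincomb cs vs ! k"
    using IH(2) \<open>length v = 30\<close> \<open>k < 30\<close> by simp
  also have "\<dots> = (\<Sum>j<length (c # cs). (c # cs) ! j * (v # vs) ! j ! k)"
    unfolding IH(1) length_Cons sum.lessThan_Suc_shift by simp
  finally show ?case
    using IH(2) \<open>length v = 30\<close> by simp
qed auto

definition antipodal_pentagons_ok :: "nat \<Rightarrow> bool" where
  "antipodal_pentagons_ok j \<longleftrightarrow> antipode_face ! j < 12 \<and>
     set (map (\<lambda>i. antipode ! i) (pentagons ! j)) = set (pentagons ! (antipode_face ! j)) \<and>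
     (\<forall>j'<12. j \<noteq> j' \<longrightarrow> \<not> set (pentagons ! j) \<subseteq> set (pentagons ! j'))"

lemma antipodal_pentagons_ok_all: "\<forall>j<12. antipodal_pentagons_ok j"
  by (simp only: antipodal_pentagons_ok_def all_less_expand) (simp add: table_nth insert_commute)

definition tetra_coords :: "nat \<Rightarrow> int list" where
  "tetra_coords t = map2 (-) (edge_coords (out_edges (tetrahedra ! t)))
     (edge_coords (out_edges (map (\<lambda>i. antipode ! i) (tetrahedra ! t))))"

text \<open>The solution is a 2-chain mod 3 with boundary \<open>tetra_coords t\<close> that is invariant
  under the antipodal map; adding multiples of the fundamental class (the sum of all faces) then
  makes it vanish on any pair of antipodal faces.\<close>
definition tetra_solution_ok :: "nat \<Rightarrow> bool" where
  "tetra_solution_ok t \<longleftrightarrow> length (tetra_solution ! t) = 12 \<and>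
     map (\<lambda>x. x mod 3) (tetra_coords t) = map (\<lambda>x. x mod 3) (lincomb (tetra_solution ! t) pentagon_coords) \<and>
     (\<forall>j<12. tetra_solution ! t ! j mod 3 = tetra_solution ! t ! (antipode_face ! j) mod 3)"

lemma tetra_solution_ok_all: "\<forall>t<10. tetra_solution_ok t"
  by (simp only: tetra_solution_ok_def tetra_coords_def all_less_expand)
    (simp add: table_nth out_edges_def replicate_numeral add_at_def basis_index_def basis_sign_def edge_basis_def
      pentagon_coords_def)

lemma pentagon_coords_closed:
  "length pentagon_coords = 12 \<and> (\<forall>v\<in>set pentagon_coords. length v = 30) \<and>
     lincomb (replicate 12 1) pentagon_coords = replicate 30 0"
  by (simp add: pentagon_coords_def replicate_numeral)

lemma uminus_vert_image:
  "set vs \<subseteq> {..<20} \<Longrightarrow> uminus ` vert ` set vs = vert ` set (map (\<lambda>i. antipode ! i) vs)"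
  using vert_antipode(1) by (force simp: image_image)

lemma antipode_facts:
  assumes "set vs \<subseteq> {..<20}" "distinct vs"
  shows "set (map (\<lambda>i. antipode ! i) vs) \<subseteq> {..<20}" "distinct (map (\<lambda>i. antipode ! i) vs)"
proof -
  show "set (map (\<lambda>i. antipode ! i) vs) \<subseteq> {..<20}"
    using assms(1) vert_antipode(2) by auto
  have "inj_on (\<lambda>i. antipode ! i) (set vs)"
  proof (rule inj_onI)
    fix i j assume ij: "i \<in> set vs" "j \<in> set vs" "antipode ! i = antipode ! j"
    then have "vert i = vert j"
      using vert_antipode(1) assms(1) by (metis lessThan_iff minus_equation_iff subsetD)
    then show "i = j"
      using vert_eq_iff ij assms(1) by auto
  qed
  then show "distinct (map (\<lambda>i. antipode ! i) vs)"
    using assms(2) by (simp add: distinct_map)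
qed

lemma delta_edge_tetrahedron:
  assumes t: "t < 10"
  shows "delta_edge (vert ` set (tetrahedra ! t)) w = (\<Sum>k<30. tetra_coords t ! k * vert_edge_chain (edge_basis ! k) w)"
proof -
  define vs where "vs = tetrahedra ! t"
  define vs' where "vs' = map (\<lambda>i. antipode ! i) vs"
  have vs: "set vs \<subseteq> {..<20}" "distinct vs"
    using tetrahedra_facts t unfolding vs_def by auto
  have vs': "set vs' \<subseteq> {..<20}" "distinct vs'"
    using antipode_facts[OF vs] unfolding vs'_def by auto
  have edges: "set (out_edges xs) \<subseteq> set all_edges" if "set xs \<subseteq> {..<20}" for xs
    using that unfolding set_out_edges set_all_edges by auto
  have "delta_edge (vert ` set vs) w
      = sum_list (map (\<lambda>p. vert_edge_chain p w) (out_edges vs)) - sum_list (map (\<lambda>p. vert_edge_chain p w) (out_edges vs'))"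
    unfolding delta_edge_def minus_apply uminus_vert_image[OF vs(1)] vs'_def[symmetric]
      vertex_set_star_sum[OF vs] vertex_set_star_sum[OF vs'] ..
  also have "\<dots> = (\<Sum>k<30. (edge_coords (out_edges vs) ! k - edge_coords (out_edges vs') ! k) * vert_edge_chain (edge_basis ! k) w)"
    unfolding sum_vert_edge_chain_edge_coords[OF edges[OF vs(1)]] sum_vert_edge_chain_edge_coords[OF edges[OF vs'(1)]]
    by (simp add: sum_subtractf left_diff_distrib)
  also have "\<dots> = (\<Sum>k<30. tetra_coords t ! k * vert_edge_chain (edge_basis ! k) w)"
    unfolding tetra_coords_def vs_def[symmetric] vs'_def[symmetric] using length_edge_coords
    by (intro sum.cong) auto
  finally show ?thesis
    unfolding vs_def .
qed

lemma sum_mult_mod_cong: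
  fixes a b e :: "'a \<Rightarrow> int"
  assumes "\<forall>k\<in>K. a k mod m = b k mod m"
  shows "(\<Sum>k\<in>K. a k * e k) mod m = (\<Sum>k\<in>K. b k * e k) mod m"
proof -
  have "(\<Sum>k\<in>K. a k * e k) mod m = (\<Sum>k\<in>K. a k mod m * e k mod m) mod m"
    by (simp add: mod_sum_eq mod_mult_left_eq)
  also have "\<dots> = (\<Sum>k\<in>K. b k * e k) mod m"
    using assms by (simp add: mod_sum_eq mod_mult_left_eq)
  finally show ?thesis .
qed

lemma sum_mult_mod_subset:
  fixes c x :: "'a \<Rightarrow> int"
  assumes "finite A" "B \<subseteq> A" "\<forall>j\<in>A - B. c j mod m = 0"
  shows "(\<Sum>j\<in>B. c j * x j) mod m = (\<Sum>j\<in>A. c j * x j) mod m"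
proof -
  have "m dvd (\<Sum>j\<in>A - B. c j * x j)"
    using assms(3) by (intro dvd_sum) (simp add: mod_eq_0_iff_dvd)
  moreover have "(\<Sum>j\<in>A. c j * x j) = (\<Sum>j\<in>B. c j * x j) + (\<Sum>j\<in>A - B. c j * x j)"
    using assms(1,2) by (simp add: sum.subset_diff)
  ultimately show ?thesis
    by (auto elim!: dvdE)
qed

definition face :: "nat \<Rightarrow> pt set" where
  "face j = vert ` set (pentagons ! j)"

lemma inj_on_face: "inj_on face {..<12}"
proof (rule inj_onI)
  fix j j' assume jj: "j \<in> {..<12}" "j' \<in> {..<12}" "face j = face j'"
  have "set (pentagons ! j) \<subseteq> set (pentagons ! j')"
  proof
    fix m assume m: "m \<in> set (pentagons ! j)"
    then obtain m' where "m' \<in> set (pentagons ! j')" "vert m = vert m'"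
      using jj(3) unfolding face_def by (metis imageE imageI)
    then show "m \<in> set (pentagons ! j')"
      using vert_eq_iff m pentagon_facts(3) jj(1,2) by (metis lessThan_iff subsetD)
  qed
  moreover have "antipodal_pentagons_ok j"
    using antipodal_pentagons_ok_all jj(1) by blast
  ultimately show "j = j'"
    using jj(2) unfolding antipodal_pentagons_ok_def by auto
qed

lemma uminus_face: "j < 12 \<Longrightarrow> uminus ` face j = face (antipode_face ! j)"
  unfolding face_def using uminus_vert_image pentagon_facts(3) antipodal_pentagons_ok_all
  unfolding antipodal_pentagons_ok_def by metis

lemma sum_face_boundary_zero: "(\<Sum>j<12. face_boundary (face j) w) = 0"
proof -
  have "(\<Sum>j<12. face_boundary (face j) w)
      = (\<Sum>k<30. (\<Sum>j<12. pentagon_coords ! j ! k) * vert_edge_chain (edge_basis ! k) w)"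
    unfolding face_def using face_boundary_pentagon
    by (simp add: sum_distrib_right sum.swap[of _ "{..<12}"])
  also have "\<dots> = 0"
  proof (intro sum.neutral ballI)
    fix k :: nat assume "k \<in> {..<30}"
    then have "lincomb (replicate 12 1) pentagon_coords ! k = (\<Sum>j<12. pentagon_coords ! j ! k)"
      using lincomb_nth[of "replicate 12 1" pentagon_coords k] pentagon_coords_closed by simp
    then show "(\<Sum>j<12. pentagon_coords ! j ! k) * vert_edge_chain (edge_basis ! k) w = 0"
      using pentagon_coords_closed \<open>k \<in> {..<30}\<close> by simp
  qed
  finally show ?thesis .
qed

lemma delta_edge_mod_3:
  assumes t: "t < 10"
  shows "delta_edge (vert ` set (tetrahedra ! t)) w mod 3
    = (\<Sum>j<12. tetra_solution ! t ! j * face_boundary (face j) w) mod 3"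
proof -
  define s where "s = tetra_solution ! t"
  have ok: "length s = 12" "map (\<lambda>x. x mod 3) (tetra_coords t) = map (\<lambda>x. x mod 3) (lincomb s pentagon_coords)"
    using tetra_solution_ok_all t unfolding tetra_solution_ok_def s_def by auto
  have "length (tetra_coords t) = 30"
    unfolding tetra_coords_def by (simp add: length_edge_coords)
  then have coords: "tetra_coords t ! k mod 3 = (\<Sum>j<12. s ! j * pentagon_coords ! j ! k) mod 3" if "k < 30" for k
    using that ok lincomb_nth[of s pentagon_coords k] pentagon_coords_closed nth_map[of k]
    by (metis (no_types, lifting))
  have "(\<Sum>j<12. s ! j * face_boundary (face j) w)
      = (\<Sum>k<30. (\<Sum>j<12. s ! j * pentagon_coords ! j ! k) * vert_edge_chain (edge_basis ! k) w)"
    unfolding face_def using face_boundary_pentagon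
    by (simp add: sum_distrib_left sum_distrib_right sum.swap[of _ "{..<12}"] mult.assoc)
  then show ?thesis
    unfolding delta_edge_tetrahedron[OF t] s_def[symmetric] using coords
    by (simp add: sum_mult_mod_cong)
qed

lemma dodeca_faces_minus_antipodal_pair:
  assumes "j0 < 12"
  shows "dodeca_faces - {face j0, uminus ` face j0} = face ` ({..<12} - {j0, antipode_face ! j0})"
proof -
  have "antipode_face ! j0 < 12"
    using antipodal_pentagons_ok_all assms unfolding antipodal_pentagons_ok_def by blast
  then show ?thesis
    unfolding dodeca_faces_eq face_def[symmetric] uminus_face[OF assms]
    using assms by (simp add: inj_on_image_set_diff[OF inj_on_face])
qed

lemma delta_edge_mod_3_off_antipodal_pair:
  assumes t: "t < 10" and j0: "j0 < 12"
  defines "s \<equiv> tetra_solution ! t"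
  shows "(\<Sum>j\<in>{..<12} - {j0, antipode_face ! j0}. (s ! j - s ! j0) * face_boundary (face j) w) mod 3
    = delta_edge (vert ` set (tetrahedra ! t)) w mod 3"
proof -
  have "s ! (antipode_face ! j0) mod 3 = s ! j0 mod 3"
    using tetra_solution_ok_all t j0 unfolding tetra_solution_ok_def s_def by simp
  then have "(s ! j - s ! j0) mod 3 = 0" if "j \<in> {j0, antipode_face ! j0}" for j
    using that by (auto simp: mod_eq_dvd_iff mod_eq_0_iff_dvd)
  then have "(\<Sum>j\<in>{..<12} - {j0, antipode_face ! j0}. (s ! j - s ! j0) * face_boundary (face j) w) mod 3
      = (\<Sum>j<12. (s ! j - s ! j0) * face_boundary (face j) w) mod 3"
    by (intro sum_mult_mod_subset) auto
  also have "(\<Sum>j<12. (s ! j - s ! j0) * face_boundary (face j) w)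
      = (\<Sum>j<12. s ! j * face_boundary (face j) w) - s ! j0 * (\<Sum>j<12. face_boundary (face j) w)"
    by (simp add: left_diff_distrib sum_subtractf sum_distrib_left)
  finally show ?thesis
    unfolding sum_face_boundary_zero delta_edge_mod_3[OF t] s_def by simp
qed

theorem lemma3p7:
  assumes "S \<in> inscribed_cubes"
    and "E \<subseteq> S" and "card E = 4"
    and "\<forall>u\<in>E. \<forall>v\<in>E. \<not> cube_adj S u v"
    and "z0 \<in> dodeca_faces"
  shows "\<exists>n :: pt set \<Rightarrow> int. \<forall>w.
           delta_edge E w mod 3 = (\<Sum>z\<in>dodeca_faces - {z0, uminus ` z0}. n z * face_boundary z w) mod 3"
proof -
  obtain t where t: "t < 10" "E = vert ` set (tetrahedra ! t)"
    using nonadjacent_cube_vertices_tetrahedron[OF assms(1-4)] by blast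
  obtain j0 where j0: "j0 < 12" "z0 = face j0"
    using assms(5) unfolding dodeca_faces_eq face_def by blast
  define s where "s = tetra_solution ! t"
  define n where "n z = (\<Sum>j<12. if z = face j then s ! j - s ! j0 else 0)" for z
  have n_face: "n (face j) = s ! j - s ! j0" if "j < 12" for j
  proof -
    have "n (face j) = (\<Sum>j'<12. if j' = j then s ! j - s ! j0 else 0)"
      unfolding n_def by (rule sum.cong) (use that in \<open>auto simp: inj_on_eq_iff[OF inj_on_face]\<close>)
    then show ?thesis
      using that by simp
  qed
  define A where "A = {..<12} - {j0, antipode_face ! j0}"
  have "inj_on face A"
    unfolding A_def by (rule inj_on_subset[OF inj_on_face]) auto
  then have sums: "(\<Sum>z\<in>dodeca_faces - {z0, uminus ` z0}. n z * face_boundary z w)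
      = (\<Sum>j\<in>A. (s ! j - s ! j0) * face_boundary (face j) w)" for w
    unfolding j0(2) dodeca_faces_minus_antipodal_pair[OF j0(1)] A_def[symmetric] sum.reindex[OF \<open>inj_on face A\<close>]
    by (intro sum.cong) (auto simp: A_def n_face)
  show ?thesis
  proof (intro exI allI)
    fix w
    show "delta_edge E w mod 3 = (\<Sum>z\<in>dodeca_faces - {z0, uminus ` z0}. n z * face_boundary z w) mod 3"
      using delta_edge_mod_3_off_antipodal_pair[OF t(1) j0(1), of w] unfolding sums t(2) A_def s_def by simp
  qed
qed

end
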